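(* Let $n\ge 2$, $\mathcal F\subseteq S_n$ with $|\mathcal F|=c\,n!$, $f=2\chi_{\mathcal F}-1$, $f_1$ its orthogonal projection onto $U_1$, $\epsilon=\mathbb E[(f-f_1)^2]$, and assume $\epsilon\ge n^{-7/3}$. Let $(X,Y)\sim\mathcal R$. With probability at least $1-3\epsilon^{1/7}$, the restriction $(X,Y)$ satisfies all of: (a) $g(X,Y)$ is $(\epsilon^{4/7},\epsilon^{1/7})$-almost Boolean; (b) $\mathbb E[g_1(X,Y)]$ and $\mathbb E[g_2(X,Y)]$ are both within $\epsilon^{1/7}$ of $c-\tfrac12$; (c) $\mathbb E[(|g(X,Y)|-1)^2]\le\epsilon^{6/7}$, where all expectations and probabilities concerning $g,g_1,g_2$ are over a uniform random $\pi\in T_{X,Y}$.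
   Context: $S_n$ is the symmetric group on $[n]$; $T_{ij}$ is the indicator of $\{\pi:\pi(i)=j\}$; $U_1=\mathrm{span}\{T_{ij}\}$ with inner product $\langle f,g\rangle=\frac1{n!}\sum_\pi f(\pi)g(\pi)$. Let $a_{ij}=(n-1)\langle f,T_{ij}\rangle-\frac{n-2}{n}(2c-1)$ (so $f_1(\pi)=\sum_i a_{i\pi(i)}$). A restriction is a pair $(X,Y)$, $X,Y\subseteq[n]$, $|X|=|Y|$; $T_{X,Y}=\{\pi:\pi(X)=Y\}$ with the uniform measure. For $\pi\in T_{X,Y}$: $g_1(X,Y)(\pi)=\sum_{i\in X}a_{i\pi(i)}$, $g_2(X,Y)(\pi)=\sum_{i\notin X}a_{i\pi(i)}$, $g(X,Y)=g_1(X,Y)+g_2(X,Y)$ (the restriction of $f_1$ to $T_{X,Y}$). The distribution $\mathcal R$: each $i$ lies in $X$ independently with probability $1/2$, then $Y$ is uniform among subsets of size $|X|$. A function $\phi$ on a probability space is $(\delta,\epsilon)$-almost Boolean if $\Pr[\,||\phi|-1|\le\epsilon\,]\ge 1-\delta$. *)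

theory Defs
  imports "HOL-Probability.Probability" "HOL-Combinatorics.Permutations"
begin

definition Sym :: "nat \<Rightarrow> (nat \<Rightarrow> nat) set" where
  "Sym n = {p. p permutes {..<n}}"

definition inner_S :: "nat \<Rightarrow> ((nat \<Rightarrow> nat) \<Rightarrow> real) \<Rightarrow> ((nat \<Rightarrow> nat) \<Rightarrow> real) \<Rightarrow> real" where
  "inner_S n f g = (\<Sum>p\<in>Sym n. f p * g p) / fact n"

definition Tij :: "nat \<Rightarrow> nat \<Rightarrow> (nat \<Rightarrow> nat) \<Rightarrow> real" where
  "Tij i j p = (if p i = j then 1 else 0)"

definition U1 :: "nat \<Rightarrow> ((nat \<Rightarrow> nat) \<Rightarrow> real) set" where
  "U1 n = {h. \<exists>lam :: nat \<Rightarrow> nat \<Rightarrow> real.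
              h = (\<lambda>p. if p \<in> Sym n then (\<Sum>i<n. \<Sum>j<n. lam i j * Tij i j p) else 0)}"

definition proj_U1 :: "nat \<Rightarrow> ((nat \<Rightarrow> nat) \<Rightarrow> real) \<Rightarrow> ((nat \<Rightarrow> nat) \<Rightarrow> real)" where
  "proj_U1 n f = (THE h. h \<in> U1 n \<and> (\<forall>u\<in>U1 n. inner_S n (\<lambda>p. f p - h p) u = 0))"

definition fam_c :: "nat \<Rightarrow> (nat \<Rightarrow> nat) set \<Rightarrow> real" where
  "fam_c n F = real (card F) / fact n"

definition fam_f :: "(nat \<Rightarrow> nat) set \<Rightarrow> (nat \<Rightarrow> nat) \<Rightarrow> real" where
  "fam_f F p = 2 * indicator F p - 1"

definition fam_eps :: "nat \<Rightarrow> (nat \<Rightarrow> nat) set \<Rightarrow> real" where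
  "fam_eps n F = inner_S n (\<lambda>p. (fam_f F p - proj_U1 n (fam_f F) p)^2) (\<lambda>_. 1)"

definition coef_a :: "nat \<Rightarrow> (nat \<Rightarrow> nat) set \<Rightarrow> nat \<Rightarrow> nat \<Rightarrow> real" where
  "coef_a n F i j = (real n - 1) * inner_S n (fam_f F) (Tij i j)
                    - (real n - 2) / real n * (2 * fam_c n F - 1)"

definition TXY :: "nat \<Rightarrow> nat set \<Rightarrow> nat set \<Rightarrow> (nat \<Rightarrow> nat) set" where
  "TXY n X Y = {p \<in> Sym n. p ` X = Y}"

definition g1 :: "nat \<Rightarrow> (nat \<Rightarrow> nat) set \<Rightarrow> nat set \<Rightarrow> (nat \<Rightarrow> nat) \<Rightarrow> real" where
  "g1 n F X p = (\<Sum>i\<in>X. coef_a n F i (p i))"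

definition g2 :: "nat \<Rightarrow> (nat \<Rightarrow> nat) set \<Rightarrow> nat set \<Rightarrow> (nat \<Rightarrow> nat) \<Rightarrow> real" where
  "g2 n F X p = (\<Sum>i\<in>{..<n} - X. coef_a n F i (p i))"

definition gfun :: "nat \<Rightarrow> (nat \<Rightarrow> nat) set \<Rightarrow> nat set \<Rightarrow> (nat \<Rightarrow> nat) \<Rightarrow> real" where
  "gfun n F X p = g1 n F X p + g2 n F X p"

text \<open>The distribution R on restrictions: X uniform on subsets of [n]
  (each i independently with prob. 1/2), then Y uniform among subsets of size |X|.\<close>
definition distR :: "nat \<Rightarrow> (nat set \<times> nat set) pmf" where
  "distR n = bind_pmf (pmf_of_set (Pow {..<n}))
      (\<lambda>X. map_pmf (\<lambda>Y. (X, Y)) (pmf_of_set {Y. Y \<subseteq> {..<n} \<and> card Y = card X}))"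

definition almost_boolean :: "'a pmf \<Rightarrow> ('a \<Rightarrow> real) \<Rightarrow> real \<Rightarrow> real \<Rightarrow> bool" where
  "almost_boolean M phi \<delta> \<epsilon> \<longleftrightarrow>
     measure_pmf.prob M {x. \<bar>\<bar>phi x\<bar> - 1\<bar> \<le> \<epsilon>} \<ge> 1 - \<delta>"

end

theory Submission
  imports Defs
begin

(* First the linear part is identified, f_1(pi) = sum_i a_{i pi(i)}; comparing Bessel's
   inequality E f_1^2 <= 1 with an exact second moment over S_n gives m^2 + B/(n-1) <= 1
   (m = 2c - 1, B = squared norm of the centred coefficients).  Three bad events are
   then bounded by Markov/Chebyshev, each by eps^(1/7):
   (1) E_R E_{T_{X,Y}} (|f_1| - 1)^2 <= E (f - f_1)^2 = eps, as averaging over T_{X,Y}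
       and then over R is uniform averaging over S_n;
   (2) E_R (E g_1(X,Y) - (c - 1/2))^2 <= 1/n, by first and second moment identities for
       sums over transposition-invariant families of sets;
   (3) the same for g_2, as complementing (X,Y) preserves R and swaps g_1, g_2.
   Outside them Chebyshev on T_{X,Y} gives (a). *)

section \<open>Averaging tools\<close>

lemma sum_involution:
  assumes "finite G" "\<And>x. x \<in> G \<Longrightarrow> \<sigma> x \<in> G" "\<And>x. x \<in> G \<Longrightarrow> \<sigma> (\<sigma> x) = x"
  shows "(\<Sum>x\<in>G. h (\<sigma> x)) = (\<Sum>x\<in>G. h x)"
proof -
  have "bij_betw \<sigma> G G"
    by (rule bij_betw_byWitness[where f'=\<sigma>]) (use assms in auto)
  thus ?thesis by (rule sum.reindex_bij_betw)
qed

text \<open>A function that is constant on a finite nonempty set equals its average there;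
  this is how all the counting identities below are obtained from symmetry.\<close>
lemma const_eq_average:
  fixes g :: "'a \<Rightarrow> real"
  assumes "finite A" "\<And>x y. x \<in> A \<Longrightarrow> y \<in> A \<Longrightarrow> g x = g y" "x \<in> A"
  shows "g x = sum g A / card A"
proof -
  have "sum g A = (\<Sum>y\<in>A. g x)" by (rule sum.cong[OF refl]) (metis assms(2,3))
  also have "\<dots> = card A * g x" by simp
  finally have "sum g A = card A * g x" .
  moreover have "card A > 0" using assms card_gt_0_iff by blast
  ultimately show ?thesis by simp
qed

lemma quadratic_form_two_values:
  fixes v :: "nat \<Rightarrow> real"
  assumes v0: "(\<Sum>i<n. v i) = 0"
    and diag: "\<And>i. i < n \<Longrightarrow> Q i i = \<alpha>"
    and offdiag: "\<And>i i'. i < n \<Longrightarrow> i' < n \<Longrightarrow> i \<noteq> i' \<Longrightarrow> Q i i' = \<beta>"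
  shows "(\<Sum>i<n. \<Sum>i'<n. v i * v i' * Q i i') = (\<alpha> - \<beta>) * (\<Sum>i<n. (v i)^2)"
proof -
  have "(\<Sum>i<n. \<Sum>i'<n. v i * v i' * Q i i') =
        (\<Sum>i<n. \<Sum>i'<n. \<beta> * (v i * v i') + (if i = i' then (\<alpha> - \<beta>) * (v i * v i') else 0))"
    by (intro sum.cong refl) (auto simp: diag offdiag algebra_simps)
  also have "\<dots> = (\<Sum>i<n. \<Sum>i'<n. \<beta> * (v i * v i')) + (\<alpha> - \<beta>) * (\<Sum>i<n. (v i)^2)"
    by (simp add: sum.distrib sum_distrib_left power2_eq_square)
  also have "(\<Sum>i<n. \<Sum>i'<n. \<beta> * (v i * v i')) = (\<Sum>i<n. \<beta> * v i * (\<Sum>i'<n. v i'))"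
    by (simp add: sum_distrib_left mult.assoc)
  finally show ?thesis using v0 by simp
qed

section \<open>Moments over transposition-invariant families of sets\<close>

definition Ksub :: "nat \<Rightarrow> nat \<Rightarrow> nat set set" where
  "Ksub n k = {Y. Y \<subseteq> {..<n} \<and> card Y = k}"

lemma Ksub_finite: "finite (Ksub n k)"
  unfolding Ksub_def by (rule finite_subset[of _ "Pow {..<n}"]) auto

lemma Ksub_card: "card (Ksub n k) = n choose k"
  unfolding Ksub_def using n_subsets[of "{..<n}" k] by simp

lemma Ksub_ne: "k \<le> n \<Longrightarrow> Ksub n k \<noteq> {}"
proof -
  assume "k \<le> n"
  hence "{..<k} \<in> Ksub n k" unfolding Ksub_def by auto
  thus ?thesis by auto
qed

text \<open>The transposition of \<open>a\<close> and \<open>b\<close>; the abbreviation avoids the clash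
  with matrix transposition.\<close>
abbreviation tr :: "nat \<Rightarrow> nat \<Rightarrow> nat \<Rightarrow> nat" where
  "tr \<equiv> Transposition.transpose"

lemma in_tr_image: "x \<in> tr a b ` X \<longleftrightarrow> tr a b x \<in> X"
proof
  assume "x \<in> tr a b ` X"
  then obtain y where "y \<in> X" "x = tr a b y" by blast
  thus "tr a b x \<in> X" by simp
next
  assume "tr a b x \<in> X"
  hence "tr a b (tr a b x) \<in> tr a b ` X" by blast
  thus "x \<in> tr a b ` X" by simp
qed

lemma tr_image_card: "card (tr a b ` X) = card X"
  by (rule card_image[OF inj_on_transpose])

lemma tr_image_sub: "a < n \<Longrightarrow> b < n \<Longrightarrow> X \<subseteq> {..<n} \<Longrightarrow> tr a b ` X \<subseteq> {..<n}"
  by (auto simp: Transposition.transpose_def)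

definition ind :: "nat \<Rightarrow> nat set \<Rightarrow> real" where
  "ind i X = (if i \<in> X then 1 else 0)"

lemma ind_sq: "ind i X * ind i X = ind i X"
  by (simp add: ind_def)

lemma sum_ind_card: "finite A \<Longrightarrow> (\<Sum>i\<in>A. ind i X) = real (card (A \<inter> X))"
  unfolding ind_def by (simp add: sum.inter_restrict[symmetric])

lemma sum_subset_as_ind:
  fixes v :: "nat \<Rightarrow> real"
  assumes "X \<subseteq> {..<n}"
  shows "(\<Sum>i\<in>X. v i) = (\<Sum>i<n. v i * ind i X)"
proof -
  have "(\<Sum>i<n. v i * ind i X) = (\<Sum>i<n. if i \<in> X then v i else 0)"
    unfolding ind_def by (rule sum.cong) auto
  also have "\<dots> = (\<Sum>i\<in>{..<n} \<inter> X. v i)"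
    by (rule sum.inter_restrict[symmetric]) simp
  also have "{..<n} \<inter> X = X" using assms by auto
  finally show ?thesis by simp
qed

definition sym_family :: "nat \<Rightarrow> nat set set \<Rightarrow> (nat set \<Rightarrow> real) \<Rightarrow> bool" where
  "sym_family n \<X> \<phi> \<longleftrightarrow> finite \<X> \<and> (\<forall>X\<in>\<X>. X \<subseteq> {..<n}) \<and>
     (\<forall>a<n. \<forall>b<n. \<forall>X\<in>\<X>. tr a b ` X \<in> \<X> \<and> \<phi> (tr a b ` X) = \<phi> X)"

lemma sym_family_Ksub: "sym_family n (Ksub n k) (\<lambda>_. 1)"
  unfolding sym_family_def Ksub_def using tr_image_sub tr_image_card
  by (auto intro: finite_subset[of _ "Pow {..<n}"])

lemma sym_family_Pow: "sym_family n (Pow {..<n}) (\<lambda>X. g (card X))"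
  unfolding sym_family_def using tr_image_sub tr_image_card by auto

lemma sym_family_card_weight:
  "sym_family n \<X> \<phi> \<Longrightarrow> sym_family n \<X> (\<lambda>X. \<phi> X * g (card X))"
  unfolding sym_family_def by (simp add: tr_image_card)

lemma sym_family_swap:
  assumes "sym_family n \<X> \<phi>" "a < n" "b < n" "\<And>X. \<psi> (tr a b ` X) = \<psi> X"
  shows "(\<Sum>X\<in>\<X>. \<phi> X * \<psi> X * ind a X) = (\<Sum>X\<in>\<X>. \<phi> X * \<psi> X * ind b X)"
proof -
  have cl: "\<And>X. X \<in> \<X> \<Longrightarrow> tr a b ` X \<in> \<X> \<and> \<phi> (tr a b ` X) = \<phi> X"
    using assms(1-3) unfolding sym_family_def by blast
  have "(\<Sum>X\<in>\<X>. \<phi> X * \<psi> X * ind b X) =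
        (\<Sum>X\<in>\<X>. (\<lambda>X. \<phi> X * \<psi> X * ind b X) (tr a b ` X))"
    by (rule sum_involution[symmetric])
       (use assms(1) cl in \<open>auto simp: sym_family_def image_image\<close>)
  also have "\<dots> = (\<Sum>X\<in>\<X>. \<phi> X * \<psi> X * ind a X)"
    by (intro sum.cong refl) (simp add: cl assms(4) ind_def in_tr_image)
  finally show ?thesis by (rule sym)
qed

lemma sym_family_single_avg:
  assumes sf: "sym_family n \<X> \<phi>" and i: "i < n"
  shows "(\<Sum>X\<in>\<X>. \<phi> X * ind i X) = (\<Sum>X\<in>\<X>. \<phi> X * real (card X)) / real n"
proof -
  define w where "w j = (\<Sum>X\<in>\<X>. \<phi> X * ind j X)" for j
  have sub: "\<And>X. X \<in> \<X> \<Longrightarrow> X \<subseteq> {..<n}" and fin: "finite \<X>"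
    using sf unfolding sym_family_def by auto
  have "w i = sum w {..<n} / card {..<n}"
  proof (rule const_eq_average)
    fix x y assume "x \<in> {..<n}" "y \<in> {..<n}"
    thus "w x = w y"
      using sym_family_swap[OF sf, of x y "\<lambda>_. 1"] unfolding w_def by simp
  qed (use i in auto)
  also have "sum w {..<n} = (\<Sum>X\<in>\<X>. \<phi> X * (\<Sum>j<n. ind j X))"
    unfolding w_def by (subst sum.swap) (simp add: sum_distrib_left)
  also have "\<dots> = (\<Sum>X\<in>\<X>. \<phi> X * real (card X))"
    by (intro sum.cong refl) (simp add: sum_ind_card Int_absorb1 sub)
  finally show ?thesis unfolding w_def by simp
qed

lemma sym_family_pair_avg:
  assumes sf: "sym_family n \<X> \<phi>" and i: "i < n" and i': "i' < n" "i' \<noteq> i"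
  shows "(\<Sum>X\<in>\<X>. \<phi> X * ind i X * ind i' X) =
         (\<Sum>X\<in>\<X>. \<phi> X * ind i X * (real (card X) - 1)) / (real n - 1)"
proof -
  let ?R = "{..<n} - {i}"
  define \<gamma> where "\<gamma> j = (\<Sum>X\<in>\<X>. \<phi> X * ind i X * ind j X)" for j
  have sub: "\<And>X. X \<in> \<X> \<Longrightarrow> X \<subseteq> {..<n}" using sf unfolding sym_family_def by auto
  have "\<gamma> i' = sum \<gamma> ?R / card ?R"
  proof (rule const_eq_average)
    fix x y assume "x \<in> ?R" "y \<in> ?R"
    thus "\<gamma> x = \<gamma> y"
      unfolding \<gamma>_def by (intro sym_family_swap[OF sf])
        (use i in \<open>auto simp: ind_def in_tr_image Transposition.transpose_def\<close>)
  qed (use i' in auto)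
  also have "sum \<gamma> ?R = (\<Sum>X\<in>\<X>. \<phi> X * ind i X * (\<Sum>j\<in>?R. ind j X))"
    unfolding \<gamma>_def by (subst sum.swap) (simp add: sum_distrib_left)
  also have "\<dots> = (\<Sum>X\<in>\<X>. \<phi> X * ind i X * (real (card X) - 1))"
  proof (intro sum.cong refl)
    fix X assume X: "X \<in> \<X>"
    have fX: "finite X" using sub[OF X] finite_subset by blast
    show "\<phi> X * ind i X * (\<Sum>j\<in>?R. ind j X) = \<phi> X * ind i X * (real (card X) - 1)"
    proof (cases "i \<in> X")
      case True
      have "?R \<inter> X = X - {i}" using sub[OF X] by auto
      moreover have "card X \<ge> 1" using True fX by (metis Suc_leI card_gt_0_iff empty_iff One_nat_def)
      ultimately show ?thesis using True fX by (simp add: sum_ind_card card_Diff_singleton of_nat_diff)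
    qed (simp add: ind_def)
  qed
  also have "real (card ?R) = real n - 1" using i by (simp add: of_nat_diff)
  finally show ?thesis unfolding \<gamma>_def .
qed

lemma square_sum_as_ind:
  fixes v :: "nat \<Rightarrow> real"
  assumes "X \<subseteq> {..<n}"
  shows "(\<Sum>i\<in>X. v i)^2 = (\<Sum>i<n. \<Sum>i'<n. v i * v i' * (ind i X * ind i' X))"
  unfolding sum_subset_as_ind[OF assms] power2_eq_square sum_product
  by (intro sum.cong refl) (simp add: algebra_simps)

lemma sym_family_first_moment:
  fixes v :: "nat \<Rightarrow> real"
  assumes sf: "sym_family n \<X> \<phi>" and v0: "(\<Sum>i<n. v i) = 0"
  shows "(\<Sum>X\<in>\<X>. \<phi> X * (\<Sum>i\<in>X. v i)) = 0"
proof -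
  have sub: "\<And>X. X \<in> \<X> \<Longrightarrow> X \<subseteq> {..<n}" using sf unfolding sym_family_def by auto
  have "(\<Sum>X\<in>\<X>. \<phi> X * (\<Sum>i\<in>X. v i)) = (\<Sum>i<n. v i * (\<Sum>X\<in>\<X>. \<phi> X * ind i X))"
    by (simp add: sum_subset_as_ind[OF sub] sum_distrib_left sum.swap[of _ \<X>] mult_ac
        cong: sum.cong)
  also have "\<dots> = (\<Sum>i<n. v i * ((\<Sum>X\<in>\<X>. \<phi> X * real (card X)) / real n))"
    by (intro sum.cong refl) (simp add: sym_family_single_avg[OF sf])
  also have "\<dots> = (\<Sum>i<n. v i) * ((\<Sum>X\<in>\<X>. \<phi> X * real (card X)) / real n)"
    by (rule sum_distrib_right[symmetric])
  finally show ?thesis using v0 by simp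
qed

lemma sym_family_second_moment:
  fixes v :: "nat \<Rightarrow> real"
  assumes sf: "sym_family n \<X> \<phi>" and n2: "n \<ge> 2" and v0: "(\<Sum>i<n. v i) = 0"
  shows "(\<Sum>X\<in>\<X>. \<phi> X * (\<Sum>i\<in>X. v i)^2) =
         (\<Sum>X\<in>\<X>. \<phi> X * real (card X) * (real n - real (card X))) / (real n * (real n - 1))
           * (\<Sum>i<n. (v i)^2)"
proof -
  define \<alpha> where "\<alpha> = (\<Sum>X\<in>\<X>. \<phi> X * real (card X)) / real n"
  define \<beta> where "\<beta> = (\<Sum>X\<in>\<X>. \<phi> X * real (card X) * (real (card X) - 1)) / (real n * (real n - 1))"
  define Q where "Q i i' = (\<Sum>X\<in>\<X>. \<phi> X * (ind i X * ind i' X))" for i i'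
  have sub: "\<And>X. X \<in> \<X> \<Longrightarrow> X \<subseteq> {..<n}" using sf unfolding sym_family_def by auto
  have diag: "Q i i = \<alpha>" if "i < n" for i
    unfolding Q_def \<alpha>_def using sym_family_single_avg[OF sf that] by (simp add: ind_sq)
  have offdiag: "Q i i' = \<beta>" if "i < n" "i' < n" "i \<noteq> i'" for i i'
  proof -
    have "Q i i' = (\<Sum>X\<in>\<X>. (\<phi> X * (real (card X) - 1)) * ind i X) / (real n - 1)"
      unfolding Q_def using sym_family_pair_avg[OF sf that(1,2)] that(3) by (simp add: mult_ac)
    also have "\<dots> = (\<Sum>X\<in>\<X>. \<phi> X * (real (card X) - 1) * real (card X)) / real n / (real n - 1)"
      using sym_family_single_avg[OF sym_family_card_weight[OF sf, of "\<lambda>k. real k - 1"] that(1)]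
      by simp
    also have "\<dots> = \<beta>"
      unfolding \<beta>_def by (simp add: divide_divide_eq_left mult_ac)
    finally show ?thesis .
  qed
  have "(\<Sum>X\<in>\<X>. \<phi> X * (\<Sum>i\<in>X. v i)^2) = (\<Sum>i<n. \<Sum>i'<n. v i * v i' * Q i i')"
    unfolding Q_def
    by (simp add: square_sum_as_ind[OF sub] sum_distrib_left sum.swap[of _ \<X>] mult_ac
        cong: sum.cong)
  also have "\<dots> = (\<alpha> - \<beta>) * (\<Sum>i<n. (v i)^2)"
    by (rule quadratic_form_two_values[OF v0 diag offdiag])
  also have "\<alpha> - \<beta> = (\<Sum>X\<in>\<X>. \<phi> X * real (card X) * (real n - real (card X))) / (real n * (real n - 1))"
  proof -
    define S1 where "S1 = (\<Sum>X\<in>\<X>. \<phi> X * real (card X))"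
    define S2 where "S2 = (\<Sum>X\<in>\<X>. \<phi> X * real (card X) * (real (card X) - 1))"
    have "\<alpha> - \<beta> = (S1 * (real n - 1) - S2) / (real n * (real n - 1))"
      unfolding \<alpha>_def \<beta>_def S1_def[symmetric] S2_def[symmetric] using n2
      by (simp add: diff_divide_distrib)
    also have "S1 * (real n - 1) - S2 = (\<Sum>X\<in>\<X>. \<phi> X * real (card X) * (real n - real (card X)))"
      unfolding S1_def S2_def sum_distrib_right sum_subtractf[symmetric]
      by (intro sum.cong refl) (simp add: algebra_simps)
    finally show ?thesis .
  qed
  finally show ?thesis .
qed
section \<open>Binomial sums over the power set of [n]\<close>

lemma sum_Pow_Suc:
  fixes h :: "nat \<Rightarrow> real"
  shows "(\<Sum>X\<in>Pow {..<Suc n}. h (card X)) = (\<Sum>X\<in>Pow {..<n}. h (card X) + h (Suc (card X)))"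
proof -
  have P: "Pow {..<Suc n} = Pow {..<n} \<union> insert n ` Pow {..<n}"
    by (simp add: lessThan_Suc Pow_insert)
  have disj: "Pow {..<n} \<inter> insert n ` Pow {..<n} = {}" by auto
  have inj: "inj_on (insert n) (Pow {..<n})"
    unfolding inj_on_def by (metis PowD insert_absorb insert_ident lessThan_iff less_irrefl subsetD)
  have "(\<Sum>X\<in>Pow {..<Suc n}. h (card X)) = (\<Sum>X\<in>Pow {..<n}. h (card X)) + (\<Sum>X\<in>insert n ` Pow {..<n}. h (card X))"
    unfolding P by (rule sum.union_disjoint) (use disj in auto)
  also have "(\<Sum>X\<in>insert n ` Pow {..<n}. h (card X)) = (\<Sum>X\<in>Pow {..<n}. h (card (insert n X)))"
    by (rule sum.reindex[OF inj, unfolded comp_def])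
  also have "\<dots> = (\<Sum>X\<in>Pow {..<n}. h (Suc (card X)))"
  proof (rule sum.cong[OF refl])
    fix X assume "X \<in> Pow {..<n}"
    hence "finite X" "n \<notin> X" using finite_subset by auto
    thus "h (card (insert n X)) = h (Suc (card X))" by simp
  qed
  finally show ?thesis by (simp add: sum.distrib)
qed

lemma sum_Pow_one: "(\<Sum>X\<in>Pow {..<n}. (1::real)) = 2^n"
  by (simp add: card_Pow)

lemma sum_Pow_card: "(\<Sum>X\<in>Pow {..<n}. real (card X)) = real n * 2^n / 2"
proof (induction n)
  case 0 thus ?case by simp
next
  case (Suc n)
  have "(\<Sum>X\<in>Pow {..<Suc n}. real (card X)) = (\<Sum>X\<in>Pow {..<n}. real (card X) + real (Suc (card X)))"
    by (rule sum_Pow_Suc)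
  also have "\<dots> = 2 * (\<Sum>X\<in>Pow {..<n}. real (card X)) + (\<Sum>X\<in>Pow {..<n}. (1::real))"
    by (simp add: sum.distrib sum_distrib_left[symmetric])
  also have "\<dots> = real (Suc n) * 2^(Suc n) / 2" unfolding Suc.IH sum_Pow_one by (simp add: field_simps)
  finally show ?case .
qed

lemma sum_Pow_card_sq: "(\<Sum>X\<in>Pow {..<n}. (real (card X))^2) = 2^n * (real n^2 + real n) / 4"
proof (induction n)
  case 0 thus ?case by simp
next
  case (Suc n)
  have "(\<Sum>X\<in>Pow {..<Suc n}. (real (card X))^2) = (\<Sum>X\<in>Pow {..<n}. (real (card X))^2 + (real (Suc (card X)))^2)"
    by (rule sum_Pow_Suc)
  also have "\<dots> = 2 * (\<Sum>X\<in>Pow {..<n}. (real (card X))^2) + 2 * (\<Sum>X\<in>Pow {..<n}. real (card X)) + (\<Sum>X\<in>Pow {..<n}. (1::real))"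
    by (simp add: sum.distrib power2_eq_square algebra_simps sum_distrib_left)
  also have "\<dots> = 2^(Suc n) * (real (Suc n)^2 + real (Suc n)) / 4" unfolding Suc.IH sum_Pow_one sum_Pow_card
    by (simp add: field_simps power2_eq_square)
  finally show ?case .
qed

lemma sum_Pow_co_card_sq: "(\<Sum>X\<in>Pow {..<n}. (real n - real (card X))^2) = 2^n * real n * (real n + 1) / 4"
proof -
  have "(\<Sum>X\<in>Pow {..<n}. (real n - real (card X))^2) =
     (\<Sum>X\<in>Pow {..<n}. (real n)^2 * 1 - 2 * real n * real (card X) + (real (card X))^2)"
    by (intro sum.cong refl) (simp add: power2_eq_square algebra_simps)
  also have "\<dots> = (real n)^2 * (\<Sum>X\<in>Pow {..<n}. (1::real)) - 2 * real n * (\<Sum>X\<in>Pow {..<n}. real (card X)) + (\<Sum>X\<in>Pow {..<n}. (real (card X))^2)"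
    by (simp add: sum.distrib sum_subtractf sum_distrib_left)
  also have "\<dots> = 2^n * real n * (real n + 1) / 4" unfolding sum_Pow_one sum_Pow_card sum_Pow_card_sq
    by (simp add: field_simps power2_eq_square)
  finally show ?thesis .
qed

lemma sum_Pow_card_dev_sq: assumes "n \<ge> 1"
  shows "(\<Sum>X\<in>Pow {..<n}. (real (card X) / real n - 1/2)^2) = 2^n / (4 * real n)"
proof -
  have n0: "real n \<noteq> 0" using assms by simp
  have "(\<Sum>X\<in>Pow {..<n}. (real (card X) / real n - 1/2)^2) =
     (\<Sum>X\<in>Pow {..<n}. (1/4) * 1 - (1 / real n) * real (card X) + (1/(real n)^2) * (real (card X))^2)"
    by (intro sum.cong refl) (use n0 in \<open>simp add: power2_eq_square field_simps\<close>)
  also have "\<dots> = (1/4) * (\<Sum>X\<in>Pow {..<n}. (1::real)) - (1 / real n) * (\<Sum>X\<in>Pow {..<n}. real (card X)) + (1/(real n)^2) * (\<Sum>X\<in>Pow {..<n}. (real (card X))^2)"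
    by (simp add: sum.distrib sum_subtractf sum_distrib_left)
  also have "\<dots> = 2^n / (4 * real n)" unfolding sum_Pow_one sum_Pow_card sum_Pow_card_sq
    using n0 by (simp add: field_simps power2_eq_square)
  finally show ?thesis .
qed

section \<open>Counting permutations with prescribed values\<close>

lemma Sym_finite: "finite (Sym n)"
  unfolding Sym_def by (rule finite_permutations) simp

lemma Sym_card: "card (Sym n) = fact n"
  unfolding Sym_def by (rule card_permutations) simp_all

lemma Sym_lt: "p \<in> Sym n \<Longrightarrow> i < n \<Longrightarrow> p i < n"
  unfolding Sym_def using permutes_in_image[of p "{..<n}" i] by simp

lemma Sym_inj: "p \<in> Sym n \<Longrightarrow> inj p"
  unfolding Sym_def using permutes_inj by blast

lemma Sym_tr: "p \<in> Sym n \<Longrightarrow> a < n \<Longrightarrow> b < n \<Longrightarrow> tr a b \<circ> p \<in> Sym n"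
  unfolding Sym_def by (auto intro: permutes_compose permutes_swap_id)

lemma tr_comp_invol: "tr a b \<circ> (tr a b \<circ> p) = p"
  by (simp add: fun_eq_iff)

lemma sum_perm_transposed:
  fixes h :: "(nat \<Rightarrow> nat) \<Rightarrow> real"
  assumes "finite P" "\<And>p. p \<in> P \<Longrightarrow> tr a b \<circ> p \<in> P"
  shows "(\<Sum>p\<in>P. h (tr a b \<circ> p)) = (\<Sum>p\<in>P. h p)"
proof (rule sum_involution)
  fix p assume "p \<in> P" thus "tr a b \<circ> p \<in> P" by (rule assms(2))
next
  fix p show "tr a b \<circ> (tr a b \<circ> p) = p" by (rule tr_comp_invol)
qed (rule assms(1))

lemma tr_eq_iff2: "tr a b x = b \<longleftrightarrow> x = a"
  by (auto simp: Transposition.transpose_def split: if_splits)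

lemma tr_fix_iff: "w \<noteq> a \<Longrightarrow> w \<noteq> b \<Longrightarrow> tr a b z = w \<longleftrightarrow> z = w"
  by (auto simp: Transposition.transpose_def split: if_splits)

lemma sum_Tij_transposed:
  fixes \<psi> :: "(nat \<Rightarrow> nat) \<Rightarrow> real"
  assumes "finite P" "\<And>p. p \<in> P \<Longrightarrow> tr a b \<circ> p \<in> P"
    "\<And>p. p \<in> P \<Longrightarrow> \<psi> (tr a b \<circ> p) = \<psi> p"
  shows "(\<Sum>p\<in>P. \<psi> p * Tij k a p) = (\<Sum>p\<in>P. \<psi> p * Tij k b p)"
proof -
  have "(\<Sum>p\<in>P. \<psi> p * Tij k b p) = (\<Sum>p\<in>P. (\<lambda>p. \<psi> p * Tij k b p) (tr a b \<circ> p))"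
    by (rule sum_perm_transposed[symmetric]) (use assms in auto)
  also have "\<dots> = (\<Sum>p\<in>P. \<psi> p * Tij k a p)"
  proof (rule sum.cong[OF refl])
    fix p assume "p \<in> P"
    have "Tij k b (tr a b \<circ> p) = Tij k a p" unfolding Tij_def by (simp add: tr_eq_iff2)
    thus "\<psi> (tr a b \<circ> p) * Tij k b (tr a b \<circ> p) = \<psi> p * Tij k a p" using assms(3)[OF \<open>p \<in> P\<close>] by simp
  qed
  finally show ?thesis by (rule sym)
qed

lemma sum_Tij_row:
  assumes "p \<in> Sym n" "k < n"
  shows "(\<Sum>l<n. Tij k l p) = 1"
proof -
  have "(\<Sum>l<n. Tij k l p) = (\<Sum>l\<in>{..<n}. if l = p k then 1 else 0)"
    unfolding Tij_def by (intro sum.cong) auto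
  also have "\<dots> = 1" using Sym_lt[OF assms] by simp
  finally show ?thesis .
qed

lemma sum_Tij_col:
  assumes "p \<in> Sym n" "l < n"
  shows "(\<Sum>k<n. Tij k l p) = 1"
proof -
  have pp: "p permutes {..<n}" using assms(1) unfolding Sym_def by simp
  have "(\<Sum>k<n. Tij k l p) = (\<Sum>k\<in>{..<n}. if k = inv p l then 1 else 0)"
  proof (rule sum.cong[OF refl])
    fix k show "Tij k l p = (if k = inv p l then 1 else 0)"
      unfolding Tij_def using permutes_inv_eq[OF pp, of l k] by auto
  qed
  also have "\<dots> = 1" using permutes_in_image[OF permutes_inv[OF pp], of l] assms(2) by simp
  finally show ?thesis .
qed

lemma sum_Tij:
  assumes "k < n" "l < n"
  shows "(\<Sum>p\<in>Sym n. Tij k l p) = fact n / n"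
proof -
  define c where "c l = (\<Sum>p\<in>Sym n. Tij k l p)" for l
  have ceq: "c x = c y" if "x < n" "y < n" for x y
    using sum_Tij_transposed[of "Sym n" x y "\<lambda>_. 1" k] that
    unfolding c_def by (simp add: Sym_finite Sym_tr)
  have "c l = sum c {..<n} / card {..<n}"
  proof (rule const_eq_average)
    fix x y assume "x \<in> {..<n}" "y \<in> {..<n}" thus "c x = c y" by (intro ceq) auto
  qed (use assms in auto)
  also have "sum c {..<n} = (\<Sum>p\<in>Sym n. \<Sum>l<n. Tij k l p)"
    unfolding c_def by (rule sum.swap)
  also have "\<dots> = (\<Sum>p\<in>Sym n. 1)"
    by (intro sum.cong refl) (simp add: sum_Tij_row assms)
  also have "\<dots> = fact n" by (simp add: Sym_card)
  finally show ?thesis unfolding c_def by simp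
qed

lemma sum_Tij_Tij:
  assumes "k < n" "l < n" "i < n" "i \<noteq> k" "j < n" "j \<noteq> l" "n \<ge> 2"
  shows "(\<Sum>p\<in>Sym n. Tij k l p * Tij i j p) = fact n / (real n * (real n - 1))"
proof -
  define R where "R = {..<n} - {l}"
  define c where "c j = (\<Sum>p\<in>Sym n. Tij k l p * Tij i j p)" for j
  have ceq: "c x = c y" if "x \<in> R" "y \<in> R" for x y
  proof -
    have "(\<Sum>p\<in>Sym n. Tij k l p * Tij i x p) = (\<Sum>p\<in>Sym n. Tij k l p * Tij i y p)"
    proof (rule sum_Tij_transposed)
      fix p assume "p \<in> Sym n"
      show "Tij k l (tr x y \<circ> p) = Tij k l p"
        using that tr_fix_iff[of l x y "p k"] unfolding R_def Tij_def by auto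
    qed (use that in \<open>auto simp: Sym_finite Sym_tr R_def\<close>)
    thus ?thesis unfolding c_def .
  qed
  have cR: "card R = n - 1" unfolding R_def using assms by simp
  have "c j = sum c R / card R"
  proof (rule const_eq_average)
    fix x y assume "x \<in> R" "y \<in> R" thus "c x = c y" by (rule ceq)
  qed (use assms in \<open>auto simp: R_def\<close>)
  also have "sum c R = (\<Sum>p\<in>Sym n. Tij k l p * (\<Sum>j\<in>R. Tij i j p))"
    unfolding c_def by (subst sum.swap) (simp add: sum_distrib_left)
  also have "\<dots> = (\<Sum>p\<in>Sym n. Tij k l p)"
  proof (rule sum.cong[OF refl])
    fix p assume p: "p \<in> Sym n"
    show "Tij k l p * (\<Sum>j\<in>R. Tij i j p) = Tij k l p"
    proof (cases "p k = l")
      case True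
      have "p i \<noteq> l" using True Sym_inj[OF p] assms(4) by (metis injD)
      hence "(\<Sum>j\<in>R. Tij i j p) = (\<Sum>j<n. Tij i j p)"
        unfolding R_def using sum.remove[of "{..<n}" l "\<lambda>j. Tij i j p"] assms(2) by (simp add: Tij_def)
      thus ?thesis using sum_Tij_row[OF p assms(3)] by simp
    qed (simp add: Tij_def)
  qed
  also have "\<dots> = fact n / n" by (rule sum_Tij[OF assms(1,2)])
  finally show ?thesis unfolding c_def cR using assms by (simp add: of_nat_diff)
qed

lemma sum_perm_value:
  fixes G :: "nat \<Rightarrow> real"
  assumes "k < n"
  shows "(\<Sum>p\<in>Sym n. G (p k)) = fact n / n * (\<Sum>j<n. G j)"
proof -
  have "(\<Sum>p\<in>Sym n. G (p k)) = (\<Sum>p\<in>Sym n. \<Sum>j<n. G j * Tij k j p)"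
  proof (rule sum.cong[OF refl])
    fix p assume p: "p \<in> Sym n"
    have "(\<Sum>j<n. G j * Tij k j p) = (\<Sum>j\<in>{..<n}. if j = p k then G j else 0)"
      unfolding Tij_def by (intro sum.cong refl) auto
    also have "\<dots> = G (p k)" using Sym_lt[OF p assms] by simp
    finally show "G (p k) = (\<Sum>j<n. G j * Tij k j p)" by simp
  qed
  also have "\<dots> = (\<Sum>j<n. G j * (\<Sum>p\<in>Sym n. Tij k j p))"
    by (subst sum.swap) (simp add: sum_distrib_left)
  also have "\<dots> = (\<Sum>j<n. G j * (fact n / n))"
    by (intro sum.cong refl) (simp add: sum_Tij assms)
  also have "\<dots> = (\<Sum>j<n. G j) * (fact n / n)" by (rule sum_distrib_right[symmetric])
  finally show ?thesis by (simp only: mult.commute)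
qed

lemma sum_Tij_perm_value:
  fixes H :: "nat \<Rightarrow> real"
  assumes "k < n" "i < n" "k \<noteq> i" "l < n" "n \<ge> 2"
  shows "(\<Sum>p\<in>Sym n. Tij k l p * H (p i)) = fact n / (real n * (real n - 1)) * (\<Sum>j\<in>{..<n} - {l}. H j)"
proof -
  have "(\<Sum>p\<in>Sym n. Tij k l p * H (p i)) = (\<Sum>p\<in>Sym n. \<Sum>j<n. H j * (Tij k l p * Tij i j p))"
  proof (rule sum.cong[OF refl])
    fix p assume p: "p \<in> Sym n"
    have "(\<Sum>j<n. H j * (Tij k l p * Tij i j p)) = (\<Sum>j\<in>{..<n}. if j = p i then Tij k l p * H j else 0)"
      unfolding Tij_def by (intro sum.cong refl) auto
    also have "\<dots> = Tij k l p * H (p i)" using Sym_lt[OF p assms(2)] by simp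
    finally show "Tij k l p * H (p i) = (\<Sum>j<n. H j * (Tij k l p * Tij i j p))" by simp
  qed
  also have "\<dots> = (\<Sum>j<n. H j * (\<Sum>p\<in>Sym n. Tij k l p * Tij i j p))"
    by (subst sum.swap) (simp add: sum_distrib_left)
  also have "\<dots> = (\<Sum>j<n. if j = l then 0 else H j * (fact n / (real n * (real n - 1))))"
  proof (rule sum.cong[OF refl])
    fix j assume j: "j \<in> {..<n}"
    show "H j * (\<Sum>p\<in>Sym n. Tij k l p * Tij i j p) = (if j = l then 0 else H j * (fact n / (real n * (real n - 1))))"
    proof (cases "j = l")
      case True
      have "(\<Sum>p\<in>Sym n. Tij k l p * Tij i j p) = 0"
      proof (rule sum.neutral, rule ballI)
        fix p assume p: "p \<in> Sym n"
        have "p k \<noteq> p i" using Sym_inj[OF p] assms(3) by (simp add: inj_eq)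
        thus "Tij k l p * Tij i j p = 0" using True unfolding Tij_def by auto
      qed
      thus ?thesis using True by simp
    next
      case False
      thus ?thesis using sum_Tij_Tij[of k n l i j] assms j by simp
    qed
  qed
  also have "\<dots> = (\<Sum>j\<in>{..<n} - {l}. if j = l then 0 else H j * (fact n / (real n * (real n - 1))))"
    using sum.remove[of "{..<n}" l "\<lambda>j. if j = l then 0 else H j * (fact n / (real n * (real n - 1)))"] assms(4)
    by simp
  also have "\<dots> = (\<Sum>j\<in>{..<n} - {l}. H j * (fact n / (real n * (real n - 1))))"
    by (rule sum.cong[OF refl]) simp
  also have "\<dots> = (\<Sum>j\<in>{..<n} - {l}. H j) * (fact n / (real n * (real n - 1)))"
    by (rule sum_distrib_right[symmetric])
  finally show ?thesis by (simp only: mult.commute)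
qed
section \<open>The restrictions T_{X,Y}\<close>

lemma TXY_sub: "TXY n X Y \<subseteq> Sym n"
  unfolding TXY_def by auto

lemma TXY_finite: "finite (TXY n X Y)"
  by (rule finite_subset[OF TXY_sub Sym_finite])

lemma Sym_image_card: "p \<in> Sym n \<Longrightarrow> card (p ` X) = card X"
proof -
  assume "p \<in> Sym n"
  hence "inj p" by (rule Sym_inj)
  thus ?thesis by (rule card_image[OF inj_on_subset[OF _ subset_UNIV]])
qed

lemma Sym_image_sub: "p \<in> Sym n \<Longrightarrow> X \<subseteq> {..<n} \<Longrightarrow> p ` X \<subseteq> {..<n}"
  using Sym_lt by auto

lemma mixture_sum:
  fixes \<phi> :: "(nat \<Rightarrow> nat) \<Rightarrow> real"
  assumes X: "X \<subseteq> {..<n}"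
  shows "(\<Sum>Y\<in>Ksub n (card X). \<Sum>p\<in>TXY n X Y. \<phi> p) = (\<Sum>p\<in>Sym n. \<phi> p)"
proof -
  have "(\<Sum>Y\<in>Ksub n (card X). sum \<phi> {p \<in> Sym n. p ` X = Y}) = sum \<phi> (Sym n)"
  proof (rule sum.group[OF Sym_finite Ksub_finite])
    show "(\<lambda>p. p ` X) ` Sym n \<subseteq> Ksub n (card X)"
    proof
      fix Z assume "Z \<in> (\<lambda>p. p ` X) ` Sym n"
      then obtain p where p: "p \<in> Sym n" and Z: "Z = p ` X" by blast
      show "Z \<in> Ksub n (card X)" unfolding Ksub_def Z
        using Sym_image_card[OF p, of X] Sym_image_sub[OF p X] by simp
    qed
  qed
  thus ?thesis unfolding TXY_def .
qed

lemma exists_perm_map: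
  assumes Y: "Y \<subseteq> {..<n}" and Y': "Y' \<subseteq> {..<n}" and c: "card Y = card Y'"
  shows "\<exists>\<sigma>\<in>Sym n. \<sigma> ` Y = Y'"
proof -
  let ?U = "{..<n::nat}"
  have fY: "finite Y" "finite Y'" using Y Y' finite_subset by auto
  obtain g where g: "bij_betw g Y Y'" using finite_same_card_bij[OF fY c] by blast
  have c2: "card (?U - Y) = card (?U - Y')" using Y Y' c fY by (simp add: card_Diff_subset)
  obtain h where h: "bij_betw h (?U - Y) (?U - Y')" using finite_same_card_bij[OF _ _ c2] by blast
  define \<sigma> where "\<sigma> x = (if x \<in> Y then g x else if x \<in> ?U then h x else x)" for x
  have b1: "bij_betw \<sigma> Y Y'" using g by (rule bij_betw_cong[THEN iffD1, rotated]) (simp add: \<sigma>_def)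
  have b2: "bij_betw \<sigma> (?U - Y) (?U - Y')" using h by (rule bij_betw_cong[THEN iffD1, rotated]) (simp add: \<sigma>_def)
  have "bij_betw \<sigma> (Y \<union> (?U - Y)) (Y' \<union> (?U - Y'))"
    by (rule bij_betw_combine[OF b1 b2]) auto
  moreover have "Y \<union> (?U - Y) = ?U" "Y' \<union> (?U - Y') = ?U" using Y Y' by auto
  ultimately have "bij_betw \<sigma> ?U ?U" by simp
  moreover have "\<sigma> x = x" if "x \<notin> ?U" for x using that Y unfolding \<sigma>_def by auto
  ultimately have "\<sigma> permutes ?U" by (intro bij_imp_permutes) auto
  moreover have "\<sigma> ` Y = Y'" using b1 bij_betw_imp_surj_on by blast
  ultimately show ?thesis unfolding Sym_def by blast
qed

lemma card_TXY_le:
  assumes X: "X \<subseteq> {..<n}" and Y: "Y \<subseteq> {..<n}" and Y': "Y' \<subseteq> {..<n}" and c: "card Y = card Y'"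
  shows "card (TXY n X Y) \<le> card (TXY n X Y')"
proof -
  obtain \<sigma> where s: "\<sigma> \<in> Sym n" "\<sigma> ` Y = Y'" using exists_perm_map[OF Y Y' c] by blast
  have "inj_on (\<lambda>p. \<sigma> \<circ> p) (TXY n X Y)"
  proof (rule inj_onI)
    fix p q assume "\<sigma> \<circ> p = \<sigma> \<circ> q"
    hence "\<And>x. \<sigma> (p x) = \<sigma> (q x)" by (metis comp_apply)
    hence "\<And>x. p x = q x" using Sym_inj[OF s(1)] by (simp add: inj_eq)
    thus "p = q" by (rule ext)
  qed
  moreover have "(\<lambda>p. \<sigma> \<circ> p) ` TXY n X Y \<subseteq> TXY n X Y'"
  proof
    fix q assume "q \<in> (\<lambda>p. \<sigma> \<circ> p) ` TXY n X Y"
    then obtain p where p: "p \<in> TXY n X Y" and q: "q = \<sigma> \<circ> p" by blast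
    have "q \<in> Sym n" using p s(1) unfolding q TXY_def Sym_def by (auto intro: permutes_compose)
    moreover have "q ` X = Y'"
    proof -
      have "q ` X = \<sigma> ` (p ` X)" unfolding q by (rule image_comp[symmetric])
      thus ?thesis using p s(2) unfolding TXY_def by simp
    qed
    ultimately show "q \<in> TXY n X Y'" unfolding TXY_def by simp
  qed
  ultimately show ?thesis by (rule card_inj_on_le[OF _ _ TXY_finite])
qed

lemma card_TXY:
  assumes X: "X \<subseteq> {..<n}" and Y: "Y \<in> Ksub n (card X)"
  shows "real (card (TXY n X Y)) = fact n / real (n choose card X)"
proof -
  have eq: "card (TXY n X Y1) = card (TXY n X Y2)" if "Y1 \<in> Ksub n (card X)" "Y2 \<in> Ksub n (card X)" for Y1 Y2
    using card_TXY_le[OF X, of Y1 Y2] card_TXY_le[OF X, of Y2 Y1] that unfolding Ksub_def by auto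
  have "real (card (TXY n X Y)) = (\<Sum>Y'\<in>Ksub n (card X). real (card (TXY n X Y'))) / card (Ksub n (card X))"
  proof (rule const_eq_average[OF Ksub_finite _ Y])
    fix x y assume "x \<in> Ksub n (card X)" "y \<in> Ksub n (card X)"
    thus "real (card (TXY n X x)) = real (card (TXY n X y))" using eq[of x y] by simp
  qed
  also have "(\<Sum>Y'\<in>Ksub n (card X). real (card (TXY n X Y'))) = (\<Sum>p\<in>Sym n. 1)"
    using mixture_sum[OF X, of "\<lambda>_. 1"] by simp
  also have "\<dots> = fact n" by (simp add: Sym_card)
  finally show ?thesis by (simp add: Ksub_card)
qed

lemma TXY_ne:
  assumes X: "X \<subseteq> {..<n}" and Y: "Y \<in> Ksub n (card X)"
  shows "TXY n X Y \<noteq> {}"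
proof -
  have "card X \<le> n" using X card_mono[of "{..<n}" X] by simp
  hence "real (n choose card X) > 0" by simp
  hence "real (card (TXY n X Y)) > 0" using card_TXY[OF X Y] by simp
  thus ?thesis by auto
qed

lemma TXY_transpose_closed:
  assumes Y: "Y \<subseteq> {..<n}" and j: "j \<in> Y" "j' \<in> Y" and p: "p \<in> TXY n X Y"
  shows "tr j j' \<circ> p \<in> TXY n X Y"
proof -
  have "j < n" "j' < n" using j Y by auto
  hence "tr j j' \<circ> p \<in> Sym n" using p Sym_tr unfolding TXY_def by blast
  moreover have "(tr j j' \<circ> p) ` X = tr j j' ` (p ` X)" by (rule image_comp[symmetric])
  moreover have "p ` X = Y" using p unfolding TXY_def by simp
  moreover have "tr j j' ` Y = Y" using j by (intro transpose_image_eq) simp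
  ultimately show ?thesis unfolding TXY_def by simp
qed

lemma sum_TXY_Tij:
  assumes X: "X \<subseteq> {..<n}" and Y: "Y \<in> Ksub n (card X)" and i: "i \<in> X" and j: "j \<in> Y"
  shows "(\<Sum>p\<in>TXY n X Y. Tij i j p) = real (card (TXY n X Y)) / real (card X)"
proof -
  let ?T = "TXY n X Y"
  define c where "c j = (\<Sum>p\<in>?T. Tij i j p)" for j
  have Ysub: "Y \<subseteq> {..<n}" and cY: "card Y = card X" using Y unfolding Ksub_def by auto
  have fY: "finite Y" using Ysub finite_subset by blast
  have "c j = sum c Y / card Y"
  proof (rule const_eq_average[OF fY _ j])
    fix x y assume "x \<in> Y" "y \<in> Y"
    thus "c x = c y"
      using sum_Tij_transposed[OF TXY_finite, where a=x and b=y and \<psi>="\<lambda>_. 1" and k=i] Ysub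
      unfolding c_def by (simp add: TXY_transpose_closed)
  qed
  also have "sum c Y = (\<Sum>p\<in>?T. \<Sum>j\<in>Y. Tij i j p)" unfolding c_def by (rule sum.swap)
  also have "\<dots> = (\<Sum>p\<in>?T. 1)"
  proof (rule sum.cong[OF refl])
    fix p assume "p \<in> ?T"
    hence "p i \<in> Y" using i unfolding TXY_def by auto
    moreover have "(\<Sum>j\<in>Y. Tij i j p) = (\<Sum>j\<in>Y. if j = p i then 1 else 0)"
      unfolding Tij_def by (intro sum.cong) auto
    ultimately show "(\<Sum>j\<in>Y. Tij i j p) = 1" using fY by simp
  qed
  finally show ?thesis using cY unfolding c_def by simp
qed

lemma sum_TXY_value:
  fixes G :: "nat \<Rightarrow> real"
  assumes X: "X \<subseteq> {..<n}" and Y: "Y \<in> Ksub n (card X)" and i: "i \<in> X"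
  shows "(\<Sum>p\<in>TXY n X Y. G (p i)) = real (card (TXY n X Y)) / real (card X) * (\<Sum>j\<in>Y. G j)"
proof -
  let ?T = "TXY n X Y"
  have fY: "finite Y" using Y finite_subset unfolding Ksub_def by auto
  have "(\<Sum>p\<in>?T. G (p i)) = (\<Sum>p\<in>?T. \<Sum>j\<in>Y. G j * Tij i j p)"
  proof (rule sum.cong[OF refl])
    fix p assume "p \<in> ?T"
    hence "p i \<in> Y" using i unfolding TXY_def by auto
    moreover have "(\<Sum>j\<in>Y. G j * Tij i j p) = (\<Sum>j\<in>Y. if j = p i then G j else 0)"
      unfolding Tij_def by (intro sum.cong) auto
    ultimately show "G (p i) = (\<Sum>j\<in>Y. G j * Tij i j p)" using fY by simp
  qed
  also have "\<dots> = (\<Sum>j\<in>Y. G j * (\<Sum>p\<in>?T. Tij i j p))"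
    by (subst sum.swap) (simp add: sum_distrib_left)
  also have "\<dots> = (\<Sum>j\<in>Y. G j * (real (card ?T) / real (card X)))"
    by (intro sum.cong refl) (simp add: sum_TXY_Tij[OF X Y i])
  also have "\<dots> = (\<Sum>j\<in>Y. G j) * (real (card ?T) / real (card X))"
    by (rule sum_distrib_right[symmetric])
  finally show ?thesis by (simp only: mult.commute)
qed

lemma TXY_compl:
  assumes X: "X \<subseteq> {..<n}" and Y: "Y \<subseteq> {..<n}"
  shows "TXY n ({..<n} - X) ({..<n} - Y) = TXY n X Y"
proof -
  have "p ` ({..<n} - X) = {..<n} - Y \<longleftrightarrow> p ` X = Y" if p: "p \<in> Sym n" for p
  proof -
    have pp: "p permutes {..<n}" using p unfolding Sym_def by simp
    have "p ` ({..<n} - X) = p ` {..<n} - p ` X" by (rule image_set_diff[OF permutes_inj[OF pp]])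
    also have "p ` {..<n} = {..<n}" by (rule permutes_image[OF pp])
    finally have e: "p ` ({..<n} - X) = {..<n} - p ` X" .
    have pX: "p ` X \<subseteq> {..<n}" by (rule Sym_image_sub[OF p X])
    have d1: "{..<n} - ({..<n} - p ` X) = p ` X" by (rule double_diff[OF pX]) simp
    have d2: "{..<n} - ({..<n} - Y) = Y" by (rule double_diff[OF Y]) simp
    show ?thesis unfolding e
    proof
      assume "{..<n} - p ` X = {..<n} - Y"
      hence "{..<n} - ({..<n} - p ` X) = {..<n} - ({..<n} - Y)" by simp
      thus "p ` X = Y" unfolding d1 d2 .
    qed simp
  qed
  thus ?thesis unfolding TXY_def by auto
qed

lemma g1_compl: "g1 n F ({..<n} - X) = g2 n F X"
  unfolding g1_def g2_def by (rule ext) simp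

section \<open>The distribution R of restrictions\<close>

lemma distR_expect:
  "measure_pmf.expectation (distR n) h =
     (\<Sum>X\<in>Pow {..<n}. (\<Sum>Y\<in>Ksub n (card X). h (X,Y)) / (2^n * real (n choose card X)))"
proof -
  have fin: "finite (Pow {..<n})" by simp
  have ne: "Pow {..<n} \<noteq> {}" by auto
  have kne0: "\<And>X. X \<subseteq> {..<n} \<Longrightarrow> Ksub n (card X) \<noteq> {}"
    using card_mono[of "{..<n}"] Ksub_ne by auto
  have e1: "measure_pmf.expectation (distR n) h =
     (\<Sum>X\<in>Pow {..<n}. measure_pmf.expectation (pmf_of_set (Ksub n (card X))) (\<lambda>Y. h (X, Y)) / real (card (Pow {..<n})))"
    unfolding distR_def Ksub_def[symmetric]
    by (subst pmf_expectation_bind_pmf_of_set[OF ne fin]) (auto simp: Ksub_finite kne0 divide_inverse mult.commute)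
  show ?thesis
    unfolding e1
  proof (rule sum.cong[OF refl])
    fix X assume X: "X \<in> Pow {..<n}"
    hence "card X \<le> n" using card_mono[of "{..<n}" X] by auto
    hence kne: "Ksub n (card X) \<noteq> {}" by (rule Ksub_ne)
    show "measure_pmf.expectation (pmf_of_set (Ksub n (card X))) (\<lambda>Y. h (X, Y)) / real (card (Pow {..<n}))
        = (\<Sum>Y\<in>Ksub n (card X). h (X,Y)) / (2^n * real (n choose card X))"
      using kne by (simp add: integral_pmf_of_set Ksub_finite Ksub_card card_Pow)
  qed
qed

lemma set_pmf_distR: "set_pmf (distR n) = {(X, Y). X \<subseteq> {..<n} \<and> Y \<in> Ksub n (card X)}"
proof -
  have outer: "set_pmf (pmf_of_set (Pow {..<n})) = Pow {..<n}"
    by (rule set_pmf_of_set) auto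
  have inner: "set_pmf (pmf_of_set (Ksub n (card X))) = Ksub n (card X)" if "X \<in> Pow {..<n}" for X
    using that card_mono[of "{..<n}" X] by (intro set_pmf_of_set Ksub_finite Ksub_ne) auto
  have "set_pmf (distR n) = (\<Union>X\<in>Pow {..<n}. Pair X ` Ksub n (card X))"
    unfolding distR_def Ksub_def[symmetric] set_bind_pmf set_map_pmf
    by (simp add: outer inner cong: SUP_cong_simp)
  thus ?thesis by blast
qed

lemma finite_set_pmf_distR: "finite (set_pmf (distR n))"
  unfolding set_pmf_distR Ksub_def
  by (rule finite_subset[of _ "Pow {..<n} \<times> Pow {..<n}"]) auto

lemma compl_card: "Y \<subseteq> {..<n} \<Longrightarrow> card ({..<n} - Y) = n - card Y"
  by (simp add: card_Diff_subset finite_subset)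

lemma Ksub_compl_bij:
  assumes k: "k \<le> n"
  shows "bij_betw (\<lambda>Y. {..<n} - Y) (Ksub n k) (Ksub n (n - k))"
proof (rule bij_betw_byWitness[where f'="\<lambda>Y. {..<n} - Y"])
  show "\<forall>Y\<in>Ksub n k. {..<n} - ({..<n} - Y) = Y" unfolding Ksub_def by auto
  show "\<forall>Y\<in>Ksub n (n - k). {..<n} - ({..<n} - Y) = Y" unfolding Ksub_def by auto
  show "(\<lambda>Y. {..<n} - Y) ` Ksub n k \<subseteq> Ksub n (n - k)"
    unfolding Ksub_def using compl_card by auto
  show "(\<lambda>Y. {..<n} - Y) ` Ksub n (n - k) \<subseteq> Ksub n k"
    unfolding Ksub_def using compl_card k by auto
qed

lemma distR_compl:
  fixes h :: "nat set \<times> nat set \<Rightarrow> real"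
  shows "measure_pmf.expectation (distR n) h = measure_pmf.expectation (distR n) (\<lambda>(X,Y). h ({..<n} - X, {..<n} - Y))"
proof -
  define W where "W X = (\<Sum>Y\<in>Ksub n (card X). h (X,Y)) / (2^n * real (n choose card X))" for X
  have "measure_pmf.expectation (distR n) (\<lambda>(X,Y). h ({..<n} - X, {..<n} - Y))
      = (\<Sum>X\<in>Pow {..<n}. (\<Sum>Y\<in>Ksub n (card X). h ({..<n} - X, {..<n} - Y)) / (2^n * real (n choose card X)))"
    by (simp add: distR_expect)
  also have "\<dots> = (\<Sum>X\<in>Pow {..<n}. W ({..<n} - X))"
  proof (rule sum.cong[OF refl])
    fix X assume "X \<in> Pow {..<n}"
    hence X: "X \<subseteq> {..<n}" by simp
    have kn: "card X \<le> n" using X card_mono[of "{..<n}" X] by simp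
    have cc: "card ({..<n} - X) = n - card X" by (rule compl_card[OF X])
    have "(\<Sum>Y\<in>Ksub n (card X). h ({..<n} - X, {..<n} - Y)) = (\<Sum>Y\<in>Ksub n (n - card X). h ({..<n} - X, Y))"
      by (rule sum.reindex_bij_betw[OF Ksub_compl_bij[OF kn]])
    moreover have "n choose card X = n choose (n - card X)" using kn by (rule binomial_symmetric)
    ultimately show "(\<Sum>Y\<in>Ksub n (card X). h ({..<n} - X, {..<n} - Y)) / (2^n * real (n choose card X)) = W ({..<n} - X)"
      unfolding W_def cc by simp
  qed
  also have "\<dots> = (\<Sum>X\<in>Pow {..<n}. W X)"
    by (rule sum_involution) auto
  also have "\<dots> = measure_pmf.expectation (distR n) h"
    unfolding W_def by (simp add: distR_expect)
  finally show ?thesis by simp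
qed

lemma distR_mixture:
  fixes \<phi> :: "(nat \<Rightarrow> nat) \<Rightarrow> real"
  shows "measure_pmf.expectation (distR n) (\<lambda>(X,Y). measure_pmf.expectation (pmf_of_set (TXY n X Y)) \<phi>)
       = (\<Sum>p\<in>Sym n. \<phi> p) / fact n"
proof -
  have "measure_pmf.expectation (distR n) (\<lambda>(X,Y). measure_pmf.expectation (pmf_of_set (TXY n X Y)) \<phi>)
     = (\<Sum>X\<in>Pow {..<n}. (\<Sum>Y\<in>Ksub n (card X). measure_pmf.expectation (pmf_of_set (TXY n X Y)) \<phi>) / (2^n * real (n choose card X)))"
    by (simp add: distR_expect)
  also have "\<dots> = (\<Sum>X\<in>Pow {..<n}. ((\<Sum>p\<in>Sym n. \<phi> p) / fact n) / 2^n)"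
  proof (rule sum.cong[OF refl])
    fix X assume "X \<in> Pow {..<n}"
    hence X: "X \<subseteq> {..<n}" by simp
    have kn: "card X \<le> n" using X card_mono[of "{..<n}" X] by simp
    hence C0: "real (n choose card X) > 0" by simp
    have "(\<Sum>Y\<in>Ksub n (card X). measure_pmf.expectation (pmf_of_set (TXY n X Y)) \<phi>)
        = (\<Sum>Y\<in>Ksub n (card X). (\<Sum>p\<in>TXY n X Y. \<phi> p) * (real (n choose card X) / fact n))"
    proof (rule sum.cong[OF refl])
      fix Y assume Y: "Y \<in> Ksub n (card X)"
      show "measure_pmf.expectation (pmf_of_set (TXY n X Y)) \<phi> = (\<Sum>p\<in>TXY n X Y. \<phi> p) * (real (n choose card X) / fact n)"
        using card_TXY[OF X Y] C0 by (simp add: integral_pmf_of_set[OF TXY_ne[OF X Y] TXY_finite])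
    qed
    also have "\<dots> = (\<Sum>p\<in>Sym n. \<phi> p) * (real (n choose card X) / fact n)"
      by (subst sum_distrib_right[symmetric]) (simp only: mixture_sum[OF X])
    finally show "(\<Sum>Y\<in>Ksub n (card X). measure_pmf.expectation (pmf_of_set (TXY n X Y)) \<phi>) / (2^n * real (n choose card X))
        = ((\<Sum>p\<in>Sym n. \<phi> p) / fact n) / 2^n"
      using C0 by (simp add: field_simps)
  qed
  also have "\<dots> = (\<Sum>p\<in>Sym n. \<phi> p) / fact n" by (simp add: card_Pow)
  finally show ?thesis .
qed

section \<open>Markov-type inequalities for finitely supported distributions\<close>

lemma pmf_markov:
  fixes h :: "'a \<Rightarrow> real"
  assumes "finite (set_pmf M)" "\<And>x. x \<in> set_pmf M \<Longrightarrow> 0 \<le> h x" "0 < s"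
  shows "measure_pmf.prob M {x. s \<le> h x} \<le> measure_pmf.expectation M h / s"
  using integral_Markov_inequality_measure[of M h UNIV s] assms
  by (simp add: integrable_measure_pmf_finite AE_measure_pmf_iff)

lemma pmf_abs_large:
  fixes h :: "'a \<Rightarrow> real"
  assumes fin: "finite (set_pmf M)" and s: "0 < s"
  shows "measure_pmf.prob M {x. s \<le> \<bar>h x\<bar>} \<le> measure_pmf.expectation M (\<lambda>x. (h x)^2) / s^2"
proof -
  have "{x. s \<le> \<bar>h x\<bar>} = {x. s^2 \<le> (h x)^2}"
    using s by (auto simp: abs_le_square_iff[symmetric])
  thus ?thesis using s by (simp add: pmf_markov[OF fin])
qed

lemma pmf_cover_bound:
  assumes "\<And>x. x \<in> set_pmf M \<Longrightarrow> x \<in> A \<union> B \<union> C \<union> D"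
  shows "1 - measure_pmf.prob M B - measure_pmf.prob M C - measure_pmf.prob M D \<le> measure_pmf.prob M A"
proof -
  have "measure_pmf.prob M (A \<union> B \<union> C \<union> D) = 1"
    using assms by (subst measure_pmf.prob_eq_1) (auto simp: AE_measure_pmf_iff)
  moreover have "measure_pmf.prob M (A \<union> B \<union> C \<union> D)
      \<le> measure_pmf.prob M A + measure_pmf.prob M B + measure_pmf.prob M C + measure_pmf.prob M D"
    by (smt (verit) measure_Un_le sets_measure_pmf UNIV_I)
  ultimately show ?thesis by simp
qed

lemma almost_boolean_second_moment:
  fixes g :: "'a \<Rightarrow> real"
  assumes fin: "finite (set_pmf M)" and t: "0 < t"
    and E: "measure_pmf.expectation M (\<lambda>x. (\<bar>g x\<bar> - 1)^2) \<le> t^2 * \<delta>"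
  shows "almost_boolean M g \<delta> t"
proof -
  let ?near = "{x. \<bar>\<bar>g x\<bar> - 1\<bar> \<le> t}" and ?far = "{x. t \<le> \<bar>\<bar>g x\<bar> - 1\<bar>}"
  have "1 - measure_pmf.prob M ?near = measure_pmf.prob M (UNIV - ?near)"
    using measure_pmf.prob_compl[of ?near M] by simp
  also have "\<dots> \<le> measure_pmf.prob M ?far"
    by (intro measure_pmf.finite_measure_mono) auto
  also have "\<dots> \<le> measure_pmf.expectation M (\<lambda>x. (\<bar>g x\<bar> - 1)^2) / t^2"
    using pmf_abs_large[OF fin t, of "\<lambda>x. \<bar>g x\<bar> - 1"] by simp
  also have "\<dots> \<le> \<delta>" using E t by (simp add: divide_le_eq mult.commute)
  finally show ?thesis unfolding almost_boolean_def by simp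
qed

section \<open>Elementary real estimates\<close>

lemma square_affine: "(x / k + A)^2 = (1/k^2) * x^2 + (2*A/k) * x + (A::real)^2"
proof (cases "k = 0")
  case True thus ?thesis by simp
next
  case False thus ?thesis by (simp add: power2_eq_square field_simps)
qed

text \<open>The final arithmetic of the deviation bound: given the coefficient constraint
  m^2 + B/(N-1) \<le> 1 and the bound on the weighted column sums P, the mean square
  deviation is at most 1/N.\<close>
lemma deviation_arith:
  fixes N B P m :: real and k :: nat
  assumes N: "N \<ge> 2" and B: "B \<ge> 0" and constraint: "m^2 + B / (N - 1) \<le> 1"
    and P: "P \<le> 2^k * (N + 1) / (4 * (N - 1)) * B"
  shows "P / (N * (N - 1) * 2^k) + m^2 / (4 * N) \<le> 1 / N"
proof -
  define M where "M = N - 1"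
  have M: "M \<ge> 1" "N = M + 1" unfolding M_def using N by auto
  define c where "c = (M + 2) / (4 * (M + 1) * M)"
  define t where "t = B / M"
  have c0: "0 \<le> c" using M unfolding c_def by simp
  have "(M + 2) / (4 * M) \<le> 1" using M by simp
  hence "(M + 2) / (4 * M) / (M + 1) \<le> 1 / (M + 1)" using M by (intro divide_right_mono) auto
  hence c1: "c \<le> 1 / (M + 1)" unfolding c_def by (simp add: divide_divide_eq_left mult_ac)
  have P': "P \<le> 2^k * (M + 2) / (4 * M) * B" using P unfolding M(2) by (simp add: add.commute)
  have "P / (N * (N - 1) * 2^k) = P / ((M + 1) * M * 2^k)" unfolding M(2) by simp
  also have "\<dots> \<le> (2^k * (M + 2) / (4 * M) * B) / ((M + 1) * M * 2^k)"
    using P' M by (intro divide_right_mono) auto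
  also have "\<dots> = ((M + 2) / (4 * M) * B) / ((M + 1) * M)"
    by simp
  also have "\<dots> = c * t"
    unfolding c_def t_def by (simp add: mult_ac)
  finally have Pc: "P / (N * (N - 1) * 2^k) \<le> c * t" .
  have "1 / (4 * N) * 1 \<le> 1 / (4 * N) * ((M + 2) / M)"
    using M by (intro mult_left_mono) auto
  also have "\<dots> = c" unfolding c_def M(2) by (simp add: mult_ac)
  finally have "m^2 * (1 / (4 * N)) \<le> m^2 * c" by (intro mult_left_mono) auto
  hence mc: "m^2 / (4 * N) \<le> c * m^2" by (simp add: mult.commute)
  have "P / (N * (N - 1) * 2^k) + m^2 / (4 * N) \<le> c * (t + m^2)"
    using Pc mc by (simp add: algebra_simps)
  also have "\<dots> \<le> c * 1" using constraint c0 M unfolding t_def by (intro mult_left_mono) auto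
  finally show ?thesis using c1 M by simp
qed

text \<open>The exponent bookkeeping of Lemma 2.4, with t = eps^(1/7).\<close>
lemma eps_powers:
  fixes e :: real
  assumes n: "0 < n" and e: "real n powr (-7/3) \<le> e"
  shows "0 < e" and "e / e powr (6/7) = e powr (1/7)"
    and "1 / (real n * (e powr (1/7))^2) \<le> e powr (1/7)"
    and "e powr (6/7) = (e powr (1/7))^2 * e powr (4/7)"
proof -
  show epos: "0 < e" using e n by (smt (verit) powr_gt_zero of_nat_0_less_iff)
  have sq: "(e powr (1/7))^2 = e powr (2/7)"
    unfolding power2_eq_square powr_add[symmetric] by simp
  show "e / e powr (6/7) = e powr (1/7)"
    using epos powr_diff[of e 1 "6/7"] by simp
  show "e powr (6/7) = (e powr (1/7))^2 * e powr (4/7)"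
    unfolding sq powr_add[symmetric] by simp
  have "1 / real n = (real n powr (-7/3)) powr (3/7)"
    unfolding powr_powr using n by (simp add: powr_neg_one)
  also have "\<dots> \<le> e powr (3/7)" using e by (intro powr_mono2) auto
  also have "\<dots> = e powr (1/7) * (e powr (1/7))^2"
    unfolding sq powr_add[symmetric] by simp
  finally have "1 / real n / (e powr (1/7))^2 \<le> e powr (1/7) * (e powr (1/7))^2 / (e powr (1/7))^2"
    by (intro divide_right_mono) auto
  thus "1 / (real n * (e powr (1/7))^2) \<le> e powr (1/7)"
    using epos by (simp add: divide_divide_eq_left)
qed

section \<open>The linear part f_1 of the family\<close>

locale family =
  fixes n :: nat and F :: "(nat \<Rightarrow> nat) set"
  assumes n2: "n \<ge> 2" and FS: "F \<subseteq> Sym n"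
begin

abbreviation "f \<equiv> fam_f F"
abbreviation "m \<equiv> 2 * fam_c n F - 1"
abbreviation "a \<equiv> coef_a n F"

lemma n_pos: "real n > 0"
  using n2 by simp

definition corr :: "nat \<Rightarrow> nat \<Rightarrow> real" where
  "corr k l = (\<Sum>p\<in>Sym n. f p * Tij k l p)"

definition f1 :: "(nat \<Rightarrow> nat) \<Rightarrow> real" where
  "f1 p = (\<Sum>i<n. a i (p i))"

lemma sum_f: "(\<Sum>p\<in>Sym n. f p) = fact n * m"
proof -
  have "(\<Sum>p\<in>Sym n. f p) = 2 * (\<Sum>p\<in>Sym n. indicator F p) - (\<Sum>p\<in>Sym n. (1::real))"
    unfolding fam_f_def by (simp add: sum_subtractf sum_distrib_left)
  also have "(\<Sum>p\<in>Sym n. indicator F p) = real (card F)"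
  proof -
    have "(\<Sum>p\<in>Sym n. indicator F p :: real) = (\<Sum>p\<in>Sym n. if p \<in> F then (1::real) else 0)"
      by (rule sum.cong) (auto simp: indicator_def)
    also have "\<dots> = (\<Sum>p\<in>Sym n \<inter> F. 1)"
      by (rule sum.inter_restrict[OF Sym_finite, symmetric])
    also have "Sym n \<inter> F = F" using FS by blast
    finally show ?thesis by simp
  qed
  finally have h: "(\<Sum>p\<in>Sym n. f p) = 2 * real (card F) - fact n" by (simp add: Sym_card)
  have "fact n * (2 * (real (card F) / fact n) - 1) = 2 * real (card F) - (fact n :: real)"
    using fact_gt_zero[where 'a=real] by (simp add: field_simps)
  thus ?thesis unfolding fam_c_def h by simp
qed

lemma inner_T: "inner_S n f (Tij k l) = corr k l / fact n"
  unfolding inner_S_def corr_def Tij_def by simp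

lemma a_corr: "a k l = (real n - 1) * (corr k l / fact n) - (real n - 2) / real n * m"
  unfolding coef_a_def inner_T by simp

lemma corr_row: "k < n \<Longrightarrow> (\<Sum>l<n. corr k l) = fact n * m"
  unfolding corr_def by (subst sum.swap) (simp add: sum_distrib_left[symmetric] sum_Tij_row sum_f)

lemma corr_col: "l < n \<Longrightarrow> (\<Sum>k<n. corr k l) = fact n * m"
  unfolding corr_def by (subst sum.swap) (simp add: sum_distrib_left[symmetric] sum_Tij_col sum_f)

lemma a_row: "k < n \<Longrightarrow> (\<Sum>l<n. a k l) = m"
proof -
  assume k: "k < n"
  have "(\<Sum>l<n. a k l) = (real n - 1) / fact n * (\<Sum>l<n. corr k l) - real n * ((real n - 2) / real n * m)"
    unfolding a_corr by (simp add: sum_subtractf sum_distrib_left sum_divide_distrib)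
  also have "\<dots> = m" using k n2 fact_gt_zero by (simp add: corr_row field_simps)
  finally show ?thesis .
qed

lemma a_col: "l < n \<Longrightarrow> (\<Sum>k<n. a k l) = m"
proof -
  assume l: "l < n"
  have "(\<Sum>k<n. a k l) = (real n - 1) / fact n * (\<Sum>k<n. corr k l) - real n * ((real n - 2) / real n * m)"
    unfolding a_corr by (simp add: sum_subtractf sum_distrib_left sum_divide_distrib)
  also have "\<dots> = m" using l n2 fact_gt_zero by (simp add: corr_col field_simps)
  finally show ?thesis .
qed

lemma a_row_rem: "i < n \<Longrightarrow> l < n \<Longrightarrow> (\<Sum>j\<in>{..<n} - {l}. a i j) = m - a i l"
  using sum.remove[of "{..<n}" l "a i"] a_row[of i] by simp

lemma a_col_rem: "k < n \<Longrightarrow> l < n \<Longrightarrow> (\<Sum>i\<in>{..<n} - {k}. a i l) = m - a k l"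
  using sum.remove[of "{..<n}" k "\<lambda>i. a i l"] a_col[of l] by simp

lemma sum_Tij_f1:
  assumes k: "k < n" and l: "l < n"
  shows "(\<Sum>p\<in>Sym n. Tij k l p * f1 p) = corr k l"
proof -
  define c2 :: real where "c2 = fact n / (real n * (real n - 1))"
  have "(\<Sum>p\<in>Sym n. Tij k l p * f1 p) = (\<Sum>p\<in>Sym n. \<Sum>i<n. Tij k l p * a i (p i))"
    unfolding f1_def by (simp add: sum_distrib_left)
  also have "\<dots> = (\<Sum>i<n. \<Sum>p\<in>Sym n. Tij k l p * a i (p i))" by (rule sum.swap)
  also have "\<dots> = (\<Sum>p\<in>Sym n. Tij k l p * a k (p k)) + (\<Sum>i\<in>{..<n} - {k}. \<Sum>p\<in>Sym n. Tij k l p * a i (p i))"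
    using sum.remove[of "{..<n}" k "\<lambda>i. \<Sum>p\<in>Sym n. Tij k l p * a i (p i)"] k by simp
  also have "(\<Sum>p\<in>Sym n. Tij k l p * a k (p k)) = (\<Sum>p\<in>Sym n. a k l * Tij k l p)"
    by (intro sum.cong refl) (simp add: Tij_def)
  also have "\<dots> = a k l * (fact n / n)" by (simp add: sum_distrib_left[symmetric] sum_Tij k l)
  also have "(\<Sum>i\<in>{..<n} - {k}. \<Sum>p\<in>Sym n. Tij k l p * a i (p i)) = (\<Sum>i\<in>{..<n} - {k}. c2 * (m - a i l))"
  proof (rule sum.cong[OF refl])
    fix i assume i: "i \<in> {..<n} - {k}"
    have "(\<Sum>p\<in>Sym n. Tij k l p * a i (p i)) = c2 * (\<Sum>j\<in>{..<n} - {l}. a i j)"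
      unfolding c2_def by (rule sum_Tij_perm_value) (use i k l n2 in auto)
    also have "\<dots> = c2 * (m - a i l)" using i l by (simp add: a_row_rem)
    finally show "(\<Sum>p\<in>Sym n. Tij k l p * a i (p i)) = c2 * (m - a i l)" .
  qed
  also have "\<dots> = c2 * ((real n - 1) * m - (m - a k l))"
  proof -
    have "(\<Sum>i\<in>{..<n} - {k}. c2 * (m - a i l)) = c2 * ((\<Sum>i\<in>{..<n} - {k}. m) - (\<Sum>i\<in>{..<n} - {k}. a i l))"
      by (simp add: sum_distrib_left[symmetric] sum_subtractf)
    also have "(\<Sum>i\<in>{..<n} - {k}. m) = (real n - 1) * m" using k by (simp add: of_nat_diff)
    finally show ?thesis using a_col_rem[OF k l] by simp
  qed
  also have "a k l * (fact n / n) + c2 * ((real n - 1) * m - (m - a k l)) = corr k l"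
  proof -
    have n0: "real n \<noteq> 0" "real n - 1 \<noteq> 0" using n2 by auto
    show ?thesis unfolding c2_def a_corr using n0 fact_gt_zero by (simp add: field_simps)
  qed
  finally show ?thesis .
qed

definition f1_ext :: "(nat \<Rightarrow> nat) \<Rightarrow> real" where
  "f1_ext p = (if p \<in> Sym n then (\<Sum>i<n. \<Sum>j<n. a i j * Tij i j p) else 0)"

lemma sum_T_eval: "p \<in> Sym n \<Longrightarrow> i < n \<Longrightarrow> (\<Sum>j<n. lam i j * Tij i j p) = lam i (p i)"
proof -
  assume p: "p \<in> Sym n" and i: "i < n"
  have "(\<Sum>j<n. lam i j * Tij i j p) = (\<Sum>j\<in>{..<n}. if j = p i then lam i j else 0)"
    unfolding Tij_def by (intro sum.cong refl) auto
  also have "\<dots> = lam i (p i)" using Sym_lt[OF p i] by simp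
  finally show ?thesis .
qed

lemma f1_ext_eq: "p \<in> Sym n \<Longrightarrow> f1_ext p = f1 p"
  unfolding f1_ext_def f1_def by (simp add: sum_T_eval)

lemma f1_ext_U1: "f1_ext \<in> U1 n"
  unfolding U1_def f1_ext_def by blast

lemma orth_Tij: "i < n \<Longrightarrow> j < n \<Longrightarrow> (\<Sum>p\<in>Sym n. (f p - f1 p) * Tij i j p) = 0"
proof -
  assume i: "i < n" and j: "j < n"
  have "(\<Sum>p\<in>Sym n. (f p - f1 p) * Tij i j p) = corr i j - (\<Sum>p\<in>Sym n. Tij i j p * f1 p)"
    unfolding corr_def by (simp add: sum_subtractf algebra_simps)
  thus ?thesis using sum_Tij_f1[OF i j] by simp
qed

lemma orth_U1: "u \<in> U1 n \<Longrightarrow> (\<Sum>p\<in>Sym n. (f p - f1_ext p) * u p) = 0"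
proof -
  assume "u \<in> U1 n"
  then obtain lam where u: "u = (\<lambda>p. if p \<in> Sym n then (\<Sum>i<n. \<Sum>j<n. lam i j * Tij i j p) else 0)"
    unfolding U1_def by blast
  have "(\<Sum>p\<in>Sym n. (f p - f1_ext p) * u p) = (\<Sum>p\<in>Sym n. \<Sum>i<n. \<Sum>j<n. lam i j * ((f p - f1 p) * Tij i j p))"
    unfolding u by (intro sum.cong refl) (simp add: f1_ext_eq sum_distrib_left mult_ac)
  also have "\<dots> = (\<Sum>i<n. \<Sum>j<n. lam i j * (\<Sum>p\<in>Sym n. (f p - f1 p) * Tij i j p))"
    by (subst sum.swap, rule sum.cong[OF refl], subst sum.swap, simp add: sum_distrib_left)
  also have "\<dots> = 0" by (simp add: orth_Tij)
  finally show ?thesis .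
qed

lemma inner_orth: "u \<in> U1 n \<Longrightarrow> inner_S n (\<lambda>p. f p - f1_ext p) u = 0"
  unfolding inner_S_def by (simp add: orth_U1)

lemma U1_diff: "h \<in> U1 n \<Longrightarrow> (\<lambda>p. h p - f1_ext p) \<in> U1 n"
proof -
  assume "h \<in> U1 n"
  then obtain lam where h: "h = (\<lambda>p. if p \<in> Sym n then (\<Sum>i<n. \<Sum>j<n. lam i j * Tij i j p) else 0)"
    unfolding U1_def by blast
  have "(\<lambda>p. h p - f1_ext p) = (\<lambda>p. if p \<in> Sym n then (\<Sum>i<n. \<Sum>j<n. (lam i j - a i j) * Tij i j p) else 0)"
    unfolding h f1_ext_def by (auto simp: sum_subtractf algebra_simps)
  thus ?thesis unfolding U1_def mem_Collect_eq by (intro exI[of _ "\<lambda>i j. lam i j - a i j"])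
qed

lemma U1_zero_out: "h \<in> U1 n \<Longrightarrow> p \<notin> Sym n \<Longrightarrow> h p = 0"
  unfolding U1_def by auto

lemma proj_eq: "proj_U1 n f = f1_ext"
  unfolding proj_U1_def
proof (rule the_equality)
  show "f1_ext \<in> U1 n \<and> (\<forall>u\<in>U1 n. inner_S n (\<lambda>p. f p - f1_ext p) u = 0)"
    using f1_ext_U1 inner_orth by blast
next
  fix h assume h: "h \<in> U1 n \<and> (\<forall>u\<in>U1 n. inner_S n (\<lambda>p. f p - h p) u = 0)"
  define d where "d p = h p - f1_ext p" for p
  have dU: "d \<in> U1 n" unfolding d_def[abs_def] using U1_diff h by blast
  have e1: "(\<Sum>p\<in>Sym n. (f p - h p) * d p) = 0"
    using h dU unfolding inner_S_def by auto
  have e2: "(\<Sum>p\<in>Sym n. (f p - f1_ext p) * d p) = 0" using orth_U1[OF dU] .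
  have "(\<Sum>p\<in>Sym n. (d p)^2) = (\<Sum>p\<in>Sym n. (f p - f1_ext p) * d p) - (\<Sum>p\<in>Sym n. (f p - h p) * d p)"
    by (simp add: sum_subtractf[symmetric] d_def power2_eq_square algebra_simps)
  hence "(\<Sum>p\<in>Sym n. (d p)^2) = 0" using e1 e2 by simp
  hence z: "\<forall>p\<in>Sym n. (d p)^2 = 0" using sum_nonneg_eq_0_iff[of "Sym n" "\<lambda>p. (d p)^2"] Sym_finite by simp
  show "h = f1_ext"
  proof
    fix p show "h p = f1_ext p"
    proof (cases "p \<in> Sym n")
      case True thus ?thesis using z d_def by simp
    next
      case False thus ?thesis using U1_zero_out[of h p] h by (simp add: f1_ext_def)
    qed
  qed
qed

lemma eps_eq: "fam_eps n F = (\<Sum>p\<in>Sym n. (f p - f1 p)^2) / fact n"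
  unfolding fam_eps_def inner_S_def proj_eq by (simp add: f1_ext_eq)

lemma f_pm1: "\<bar>f p\<bar> = 1"
  unfolding fam_f_def by (simp add: indicator_def)

lemma sum_f1_sq_le: "(\<Sum>p\<in>Sym n. (f1 p)^2) \<le> fact n"
proof -
  have o: "(\<Sum>p\<in>Sym n. (f p - f1 p) * f1 p) = 0"
    using orth_U1[OF f1_ext_U1] by (simp add: f1_ext_eq)
  have f2: "(f p)^2 = 1" for p
  proof -
    have "\<bar>f p\<bar>^2 = 1" by (simp add: f_pm1)
    thus ?thesis by simp
  qed
  have "0 \<le> (\<Sum>p\<in>Sym n. (f p - f1 p)^2)" by (simp add: sum_nonneg)
  also have "\<dots> = (\<Sum>p\<in>Sym n. (f p)^2) - (\<Sum>p\<in>Sym n. (f1 p)^2) - 2 * (\<Sum>p\<in>Sym n. (f p - f1 p) * f1 p)"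
    by (simp add: sum_subtractf[symmetric] sum_distrib_left power2_eq_square algebra_simps)
  also have "\<dots> = fact n - (\<Sum>p\<in>Sym n. (f1 p)^2)" using o by (simp add: f2 Sym_card)
  finally show ?thesis by simp
qed

definition acen :: "nat \<Rightarrow> nat \<Rightarrow> real" where
  "acen i j = a i j - m / real n"

definition acen_norm2 :: real where
  "acen_norm2 = (\<Sum>i<n. \<Sum>j<n. (acen i j)^2)"

lemma acen_row: "i < n \<Longrightarrow> (\<Sum>j<n. acen i j) = 0"
  unfolding acen_def using n_pos by (simp add: sum_subtractf a_row)

lemma acen_col: "j < n \<Longrightarrow> (\<Sum>i<n. acen i j) = 0"
  unfolding acen_def using n_pos by (simp add: sum_subtractf a_col)

lemma acen_row_rem: "i < n \<Longrightarrow> l < n \<Longrightarrow> (\<Sum>j\<in>{..<n} - {l}. acen i j) = - acen i l"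
  using sum.remove[of "{..<n}" l "acen i"] acen_row[of i] by simp

lemma acen_col_rem: "i < n \<Longrightarrow> l < n \<Longrightarrow> (\<Sum>i'\<in>{..<n} - {i}. acen i' l) = - acen i l"
  using sum.remove[of "{..<n}" i "\<lambda>i'. acen i' l"] acen_col[of l] by simp

lemma f1_acen: "p \<in> Sym n \<Longrightarrow> f1 p = m + (\<Sum>i<n. acen i (p i))"
  unfolding f1_def acen_def using n_pos by (simp add: sum_subtractf)

lemma acen_norm2_nonneg: "acen_norm2 \<ge> 0"
  unfolding acen_norm2_def by (intro sum_nonneg) simp

lemma sum_acen_pair:
  assumes i: "i < n" and i': "i' < n" and ne: "i \<noteq> i'"
  shows "(\<Sum>p\<in>Sym n. acen i (p i) * acen i' (p i')) = - (fact n / (real n * (real n - 1))) * (\<Sum>l<n. acen i l * acen i' l)"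
proof -
  define c2 :: real where "c2 = fact n / (real n * (real n - 1))"
  have "(\<Sum>p\<in>Sym n. acen i (p i) * acen i' (p i')) = (\<Sum>p\<in>Sym n. \<Sum>l<n. acen i l * (Tij i l p * acen i' (p i')))"
  proof (rule sum.cong[OF refl])
    fix p assume p: "p \<in> Sym n"
    have "(\<Sum>l<n. acen i l * (Tij i l p * acen i' (p i'))) = (\<Sum>l\<in>{..<n}. if l = p i then acen i l * acen i' (p i') else 0)"
      unfolding Tij_def by (intro sum.cong refl) auto
    also have "\<dots> = acen i (p i) * acen i' (p i')" using Sym_lt[OF p i] by simp
    finally show "acen i (p i) * acen i' (p i') = (\<Sum>l<n. acen i l * (Tij i l p * acen i' (p i')))" by simp
  qed
  also have "\<dots> = (\<Sum>l<n. acen i l * (\<Sum>p\<in>Sym n. Tij i l p * acen i' (p i')))"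
    by (subst sum.swap) (simp add: sum_distrib_left)
  also have "\<dots> = (\<Sum>l<n. acen i l * (c2 * (- acen i' l)))"
  proof (rule sum.cong[OF refl])
    fix l assume l: "l \<in> {..<n}"
    have "(\<Sum>p\<in>Sym n. Tij i l p * acen i' (p i')) = c2 * (\<Sum>j\<in>{..<n} - {l}. acen i' j)"
      unfolding c2_def by (rule sum_Tij_perm_value) (use i i' ne l n2 in auto)
    also have "\<dots> = c2 * (- acen i' l)" using l i' by (simp add: acen_row_rem)
    finally show "acen i l * (\<Sum>p\<in>Sym n. Tij i l p * acen i' (p i')) = acen i l * (c2 * (- acen i' l))" by simp
  qed
  also have "\<dots> = - c2 * (\<Sum>l<n. acen i l * acen i' l)"
    by (simp add: sum_distrib_left mult_ac)
  finally show ?thesis unfolding c2_def .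
qed

lemma sum_acen_diag:
  assumes i: "i < n"
  shows "(\<Sum>p\<in>Sym n. acen i (p i) * acen i (p i)) = fact n / real n * (\<Sum>l<n. acen i l * acen i l)"
  using sum_perm_value[OF i, of "\<lambda>j. acen i j * acen i j"] by simp

text \<open>Summing over the second index, the off-diagonal terms contribute
  -1/(n-1) times the diagonal one, because the columns of acen sum to zero.\<close>
lemma sum_acen_row_cross:
  assumes i: "i < n"
  shows "(\<Sum>i'<n. \<Sum>p\<in>Sym n. acen i (p i) * acen i' (p i')) = fact n / (real n - 1) * (\<Sum>l<n. (acen i l)^2)"
proof -
  define c2 :: real where "c2 = fact n / (real n * (real n - 1))"
  let ?R = "{..<n} - {i}"
  have "(\<Sum>i'\<in>?R. \<Sum>p\<in>Sym n. acen i (p i) * acen i' (p i')) = (\<Sum>i'\<in>?R. - c2 * (\<Sum>l<n. acen i l * acen i' l))"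
    unfolding c2_def by (intro sum.cong refl sum_acen_pair) (use i in auto)
  also have "\<dots> = - c2 * (\<Sum>i'\<in>?R. \<Sum>l<n. acen i l * acen i' l)"
    by (rule sum_distrib_left[symmetric])
  also have "(\<Sum>i'\<in>?R. \<Sum>l<n. acen i l * acen i' l) = (\<Sum>l<n. acen i l * (\<Sum>i'\<in>?R. acen i' l))"
    by (subst sum.swap) (simp only: sum_distrib_left)
  also have "\<dots> = - (\<Sum>l<n. (acen i l)^2)"
    using i by (simp add: acen_col_rem power2_eq_square sum_negf)
  finally have off: "(\<Sum>i'\<in>?R. \<Sum>p\<in>Sym n. acen i (p i) * acen i' (p i')) = c2 * (\<Sum>l<n. (acen i l)^2)"
    by simp
  have diag: "(\<Sum>p\<in>Sym n. acen i (p i) * acen i (p i)) = fact n / real n * (\<Sum>l<n. (acen i l)^2)"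
    using sum_acen_diag[OF i] by (simp add: power2_eq_square)
  have "(\<Sum>i'<n. \<Sum>p\<in>Sym n. acen i (p i) * acen i' (p i')) =
        (\<Sum>p\<in>Sym n. acen i (p i) * acen i (p i)) + (\<Sum>i'\<in>?R. \<Sum>p\<in>Sym n. acen i (p i) * acen i' (p i'))"
    using sum.remove[of "{..<n}" i "\<lambda>i'. \<Sum>p\<in>Sym n. acen i (p i) * acen i' (p i')"] i by simp
  also have "\<dots> = (fact n / real n + c2) * (\<Sum>l<n. (acen i l)^2)"
    unfolding diag off by (simp add: algebra_simps)
  also have "fact n / real n + c2 = fact n / (real n - 1)"
    unfolding c2_def using n2 by (simp add: field_simps)
  finally show ?thesis .
qed

lemma sum_acen_perm_sq: "(\<Sum>p\<in>Sym n. (\<Sum>i<n. acen i (p i))^2) = fact n / (real n - 1) * acen_norm2"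
proof -
  have "(\<Sum>p\<in>Sym n. (\<Sum>i<n. acen i (p i))^2) = (\<Sum>p\<in>Sym n. \<Sum>i<n. \<Sum>i'<n. acen i (p i) * acen i' (p i'))"
    by (simp add: power2_eq_square sum_product)
  also have "\<dots> = (\<Sum>i<n. \<Sum>i'<n. \<Sum>p\<in>Sym n. acen i (p i) * acen i' (p i'))"
    by (subst sum.swap, rule sum.cong[OF refl], subst sum.swap, rule refl)
  also have "\<dots> = (\<Sum>i<n. fact n / (real n - 1) * (\<Sum>l<n. (acen i l)^2))"
    by (intro sum.cong refl sum_acen_row_cross) simp
  also have "\<dots> = fact n / (real n - 1) * acen_norm2"
    unfolding acen_norm2_def by (simp add: sum_distrib_left)
  finally show ?thesis .
qed

lemma sum_acen_perm: "(\<Sum>p\<in>Sym n. (\<Sum>i<n. acen i (p i))) = 0"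
proof -
  have "(\<Sum>p\<in>Sym n. (\<Sum>i<n. acen i (p i))) = (\<Sum>i<n. \<Sum>p\<in>Sym n. acen i (p i))" by (rule sum.swap)
  also have "\<dots> = (\<Sum>i<n. fact n / real n * (\<Sum>j<n. acen i j))"
    by (intro sum.cong refl) (simp add: sum_perm_value)
  also have "\<dots> = 0" by (simp add: acen_row)
  finally show ?thesis .
qed

lemma sum_f1_sq: "(\<Sum>p\<in>Sym n. (f1 p)^2) = fact n * m^2 + fact n / (real n - 1) * acen_norm2"
proof -
  have "(\<Sum>p\<in>Sym n. (f1 p)^2) = (\<Sum>p\<in>Sym n. m^2 + 2 * m * (\<Sum>i<n. acen i (p i)) + (\<Sum>i<n. acen i (p i))^2)"
    by (intro sum.cong refl) (simp add: f1_acen power2_eq_square algebra_simps)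
  also have "\<dots> = fact n * m^2 + 2 * m * (\<Sum>p\<in>Sym n. (\<Sum>i<n. acen i (p i))) + (\<Sum>p\<in>Sym n. (\<Sum>i<n. acen i (p i))^2)"
    by (simp only: sum.distrib sum_distrib_left[symmetric]) (simp add: Sym_card)
  also have "\<dots> = fact n * m^2 + fact n / (real n - 1) * acen_norm2" by (simp only: sum_acen_perm sum_acen_perm_sq)
  finally show ?thesis .
qed

text \<open>Comparing the exact second moment of f_1 with Bessel's inequality gives the
  basic constraint on the coefficients: m^2 + B/(n-1) \<le> 1.\<close>
lemma mean_coef_bound: "m^2 + acen_norm2 / (real n - 1) \<le> 1"
proof -
  have "fact n * m^2 + fact n / (real n - 1) * acen_norm2 \<le> fact n"
    using sum_f1_sq_le sum_f1_sq by simp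
  hence "fact n * (m^2 + acen_norm2 / (real n - 1)) \<le> fact n * 1" by (simp add: algebra_simps)
  thus ?thesis using fact_gt_zero[where 'a=real] by (simp only: mult_le_cancel_left_pos)
qed

section \<open>The means of g_1 and g_2 on a random restriction\<close>

lemma expectation_g1:
  assumes X: "X \<subseteq> {..<n}" and Y: "Y \<in> Ksub n (card X)"
  shows "measure_pmf.expectation (pmf_of_set (TXY n X Y)) (g1 n F X) = (\<Sum>i\<in>X. \<Sum>j\<in>Y. a i j) / real (card X)"
proof -
  let ?T = "TXY n X Y"
  have Tne: "?T \<noteq> {}" by (rule TXY_ne[OF X Y])
  have cT: "real (card ?T) > 0" using Tne TXY_finite card_gt_0_iff by auto
  have "(\<Sum>p\<in>?T. g1 n F X p) = (\<Sum>i\<in>X. \<Sum>p\<in>?T. a i (p i))"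
    unfolding g1_def by (rule sum.swap)
  also have "\<dots> = (\<Sum>i\<in>X. real (card ?T) / real (card X) * (\<Sum>j\<in>Y. a i j))"
    by (intro sum.cong refl sum_TXY_value[OF X Y])
  also have "\<dots> = real (card ?T) * ((\<Sum>i\<in>X. \<Sum>j\<in>Y. a i j) / real (card X))"
    by (simp add: sum_distrib_left sum_divide_distrib)
  finally have e: "(\<Sum>p\<in>?T. g1 n F X p) = real (card ?T) * ((\<Sum>i\<in>X. \<Sum>j\<in>Y. a i j) / real (card X))" .
  show ?thesis using cT by (simp add: integral_pmf_of_set[OF Tne TXY_finite] e)
qed

lemma gfun_eq: "X \<subseteq> {..<n} \<Longrightarrow> gfun n F X p = f1 p"
proof -
  assume X: "X \<subseteq> {..<n}"
  have "gfun n F X p = (\<Sum>i\<in>X. a i (p i)) + (\<Sum>i\<in>{..<n} - X. a i (p i))"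
    unfolding gfun_def g1_def g2_def by simp
  also have "\<dots> = (\<Sum>i<n. a i (p i))"
    using sum.subset_diff[of X "{..<n}" "\<lambda>i. a i (p i)"] X by simp
  finally show ?thesis unfolding f1_def .
qed

definition dev :: "nat set \<Rightarrow> nat set \<Rightarrow> real" where
  "dev X Y = (\<Sum>i\<in>X. \<Sum>j\<in>Y. a i j) / real (card X) - m / 2"

definition colsum :: "nat set \<Rightarrow> nat \<Rightarrow> real" where
  "colsum X j = (\<Sum>i\<in>X. acen i j)"

lemma colsum_sum0: "X \<subseteq> {..<n} \<Longrightarrow> (\<Sum>j<n. colsum X j) = 0"
proof -
  assume X: "X \<subseteq> {..<n}"
  have "(\<Sum>j<n. colsum X j) = (\<Sum>i\<in>X. \<Sum>j<n. acen i j)" unfolding colsum_def by (rule sum.swap)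
  also have "\<dots> = 0"
  proof (rule sum.neutral, rule ballI)
    fix i assume "i \<in> X" hence "i < n" using X by auto
    thus "(\<Sum>j<n. acen i j) = 0" by (rule acen_row)
  qed
  finally show ?thesis .
qed

lemma dev_form:
  assumes X: "X \<subseteq> {..<n}" and Y: "Y \<in> Ksub n (card X)"
  shows "dev X Y = (\<Sum>j\<in>Y. colsum X j) / real (card X) + m * (real (card X) / real n - 1/2)"
proof -
  have cY: "card Y = card X" using Y unfolding Ksub_def by auto
  have "(\<Sum>i\<in>X. \<Sum>j\<in>Y. a i j) = (\<Sum>i\<in>X. \<Sum>j\<in>Y. acen i j + m / real n)"
    unfolding acen_def by simp
  also have "\<dots> = (\<Sum>j\<in>Y. colsum X j) + real (card X) * real (card X) * (m / real n)"
    unfolding colsum_def by (simp add: sum.distrib cY sum.swap[of _ X Y])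
  finally have e: "(\<Sum>i\<in>X. \<Sum>j\<in>Y. a i j) = (\<Sum>j\<in>Y. colsum X j) + real (card X) * real (card X) * (m / real n)" .
  show ?thesis
  proof (cases "card X = 0")
    case True
    hence "X = {}" using X finite_subset by fastforce
    thus ?thesis unfolding dev_def by simp
  next
    case False
    thus ?thesis unfolding dev_def e using n_pos by (simp add: field_simps)
  qed
qed

text \<open>Averaging over Y by the first and second moment identities.\<close>
lemma sum_Ksub_dev_sq:
  assumes X: "X \<subseteq> {..<n}"
  shows "(\<Sum>Y\<in>Ksub n (card X). (dev X Y)^2) =
    real (n choose card X) * ((real n - real (card X)) / (real (card X) * real n * (real n - 1)) * (\<Sum>j<n. (colsum X j)^2)
      + m^2 * (real (card X) / real n - 1/2)^2)"
proof -
  let ?k = "real (card X)"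
  let ?K = "Ksub n (card X)"
  let ?C = "real (n choose card X)"
  define A where "A = m * (?k / real n - 1/2)"
  define SY where "SY Y = (\<Sum>j\<in>Y. colsum X j)" for Y
  have cK: "real (card ?K) = ?C" by (simp add: Ksub_card)
  have m1: "(\<Sum>Y\<in>?K. SY Y) = 0"
    using sym_family_first_moment[OF sym_family_Ksub colsum_sum0[OF X]] unfolding SY_def by simp
  have m2: "(\<Sum>Y\<in>?K. (SY Y)^2) = ?C * ?k * (real n - ?k) / (real n * (real n - 1)) * (\<Sum>j<n. (colsum X j)^2)"
  proof -
    have "(\<Sum>Y\<in>?K. 1 * (SY Y)^2) = (\<Sum>Y\<in>?K. 1 * real (card Y) * (real n - real (card Y))) / (real n * (real n - 1)) * (\<Sum>j<n. (colsum X j)^2)"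
      unfolding SY_def by (rule sym_family_second_moment[OF sym_family_Ksub n2 colsum_sum0[OF X]])
    also have "(\<Sum>Y\<in>?K. 1 * real (card Y) * (real n - real (card Y))) = (\<Sum>Y\<in>?K. ?k * (real n - ?k))"
      by (intro sum.cong refl) (simp add: Ksub_def)
    also have "\<dots> = ?C * (?k * (real n - ?k))" using cK by simp
    finally show ?thesis by simp
  qed
  have "(\<Sum>Y\<in>?K. (dev X Y)^2) = (\<Sum>Y\<in>?K. (1 / ?k^2) * (SY Y)^2 + (2 * A / ?k) * SY Y + A^2)"
  proof (rule sum.cong[OF refl])
    fix Y assume Y: "Y \<in> ?K"
    show "(dev X Y)^2 = (1 / ?k^2) * (SY Y)^2 + (2 * A / ?k) * SY Y + A^2"
      unfolding dev_form[OF X Y] SY_def A_def by (rule square_affine)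
  qed
  also have "\<dots> = (1 / ?k^2) * (\<Sum>Y\<in>?K. (SY Y)^2) + (2 * A / ?k) * (\<Sum>Y\<in>?K. SY Y) + ?C * A^2"
    by (simp add: sum.distrib sum_distrib_left cK)
  also have "\<dots> = ?C * ((real n - ?k) / (?k * real n * (real n - 1)) * (\<Sum>j<n. (colsum X j)^2) + m^2 * (?k / real n - 1/2)^2)"
  proof (cases "card X = 0")
    case True thus ?thesis unfolding m2 m1 A_def by (simp add: power2_eq_square)
  next
    case False
    hence "?k \<noteq> 0" by simp
    thus ?thesis unfolding m2 m1 A_def using n2 by (simp add: power2_eq_square field_simps)
  qed
  finally show ?thesis .
qed

text \<open>Averaging over X, again by the second moment identity (now over columns).\<close>
lemma sum_Pow_colsum_sq:
  "(\<Sum>X\<in>Pow {..<n}. (real n - real (card X)) / real (card X) * (\<Sum>j<n. (colsum X j)^2))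
    \<le> 2^n * (real n + 1) / (4 * (real n - 1)) * acen_norm2"
proof -
  define \<phi> where "\<phi> X = (real n - real (card X)) / real (card X)" for X :: "nat set"
  define Q where "Q = (\<Sum>X\<in>Pow {..<n}. \<phi> X * real (card X) * (real n - real (card X)))"
  have sf: "sym_family n (Pow {..<n}) \<phi>" unfolding \<phi>_def by (rule sym_family_Pow)
  have "(\<Sum>X\<in>Pow {..<n}. \<phi> X * (\<Sum>j<n. (colsum X j)^2)) = (\<Sum>j<n. \<Sum>X\<in>Pow {..<n}. \<phi> X * (\<Sum>i\<in>X. acen i j)^2)"
    unfolding colsum_def by (simp add: sum_distrib_left sum.swap[of _ "Pow {..<n}"])
  also have "\<dots> = (\<Sum>j<n. Q / (real n * (real n - 1)) * (\<Sum>i<n. (acen i j)^2))"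
  proof (rule sum.cong[OF refl])
    fix j assume "j \<in> {..<n}"
    hence "(\<Sum>i<n. acen i j) = 0" by (simp add: acen_col)
    thus "(\<Sum>X\<in>Pow {..<n}. \<phi> X * (\<Sum>i\<in>X. acen i j)^2) = Q / (real n * (real n - 1)) * (\<Sum>i<n. (acen i j)^2)"
      unfolding Q_def by (rule sym_family_second_moment[OF sf n2])
  qed
  also have "\<dots> = Q / (real n * (real n - 1)) * (\<Sum>j<n. \<Sum>i<n. (acen i j)^2)"
    by (rule sum_distrib_left[symmetric])
  also have "\<dots> = Q / (real n * (real n - 1)) * acen_norm2"
  proof -
    have sw: "(\<Sum>j<n. \<Sum>i<n. (acen i j)^2) = acen_norm2" unfolding acen_norm2_def by (rule sum.swap)
    show ?thesis by (simp only: sw)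
  qed
  also have "\<dots> \<le> 2^n * (real n + 1) / (4 * (real n - 1)) * acen_norm2"
  proof (rule mult_right_mono[OF _ acen_norm2_nonneg])
    have "Q \<le> (\<Sum>X\<in>Pow {..<n}. (real n - real (card X))^2)"
      unfolding Q_def
    proof (rule sum_mono)
      fix X assume "X \<in> Pow {..<n}"
      show "\<phi> X * real (card X) * (real n - real (card X)) \<le> (real n - real (card X))^2"
        unfolding \<phi>_def by (cases "card X = 0") (simp_all add: power2_eq_square)
    qed
    also have "\<dots> = 2^n * real n * (real n + 1) / 4" by (rule sum_Pow_co_card_sq)
    finally have "Q / (real n * (real n - 1)) \<le> (2^n * real n * (real n + 1) / 4) / (real n * (real n - 1))"
      using n2 by (intro divide_right_mono) auto
    also have "\<dots> = 2^n * (real n + 1) / (4 * (real n - 1))"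
      using n_pos by (simp add: divide_divide_eq_left mult_ac)
    finally show "Q / (real n * (real n - 1)) \<le> 2^n * (real n + 1) / (4 * (real n - 1))" .
  qed
  finally show ?thesis unfolding \<phi>_def .
qed

lemma expectation_dev_sq_eq:
  "measure_pmf.expectation (distR n) (\<lambda>x. (case_prod dev x)^2) =
     (\<Sum>X\<in>Pow {..<n}. (real n - real (card X)) / real (card X) * (\<Sum>j<n. (colsum X j)^2))
       / (real n * (real n - 1) * 2^n) + m^2 / (4 * real n)"
proof -
  define T where "T X = (real n - real (card X)) / real (card X) * (\<Sum>j<n. (colsum X j)^2)" for X
  define D where "D X = (real (card X) / real n - 1/2)^2" for X :: "nat set"
  have "measure_pmf.expectation (distR n) (\<lambda>x. (case_prod dev x)^2) =
        (\<Sum>X\<in>Pow {..<n}. (\<Sum>Y\<in>Ksub n (card X). (dev X Y)^2) / (2^n * real (n choose card X)))"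
    by (simp add: distR_expect)
  also have "\<dots> = (\<Sum>X\<in>Pow {..<n}. (T X / (real n * (real n - 1)) + m^2 * D X) / 2^n)"
  proof (rule sum.cong[OF refl])
    fix X assume "X \<in> Pow {..<n}"
    hence X: "X \<subseteq> {..<n}" by simp
    have "card X \<le> n" using X card_mono[of "{..<n}" X] by simp
    hence C0: "real (n choose card X) > 0" by simp
    have e: "(real n - real (card X)) / (real (card X) * real n * (real n - 1)) =
             (real n - real (card X)) / real (card X) / (real n * (real n - 1))" by (simp add: field_simps)
    show "(\<Sum>Y\<in>Ksub n (card X). (dev X Y)^2) / (2^n * real (n choose card X)) =
          (T X / (real n * (real n - 1)) + m^2 * D X) / 2^n"
      unfolding sum_Ksub_dev_sq[OF X] T_def D_def e using C0 by (simp add: field_simps)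
  qed
  also have "\<dots> = (\<Sum>X\<in>Pow {..<n}. T X) / (real n * (real n - 1) * 2^n) + m^2 * (\<Sum>X\<in>Pow {..<n}. D X) / 2^n"
    by (simp add: add_divide_distrib sum.distrib sum_divide_distrib[symmetric] sum_distrib_left
        divide_divide_eq_left)
  also have "(\<Sum>X\<in>Pow {..<n}. D X) = 2^n / (4 * real n)"
    unfolding D_def by (rule sum_Pow_card_dev_sq) (use n2 in simp)
  finally show ?thesis unfolding T_def by simp
qed

lemma expectation_dev_sq: "measure_pmf.expectation (distR n) (\<lambda>x. (case_prod dev x)^2) \<le> 1 / real n"
  unfolding expectation_dev_sq_eq
  using deviation_arith[OF _ acen_norm2_nonneg mean_coef_bound sum_Pow_colsum_sq] n2 by simp

lemma mean_g1_dev: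
  assumes X: "X \<subseteq> {..<n}" and Y: "Y \<in> Ksub n (card X)"
  shows "measure_pmf.expectation (pmf_of_set (TXY n X Y)) (g1 n F X) - (fam_c n F - 1/2) = dev X Y"
  unfolding expectation_g1[OF X Y] dev_def by (simp add: field_simps)

lemma mean_g2_dev:
  assumes X: "X \<subseteq> {..<n}" and Y: "Y \<in> Ksub n (card X)"
  shows "measure_pmf.expectation (pmf_of_set (TXY n X Y)) (g2 n F X) - (fam_c n F - 1/2) = dev ({..<n} - X) ({..<n} - Y)"
proof -
  have Ys: "Y \<subseteq> {..<n}" and cY: "card Y = card X" using Y unfolding Ksub_def by auto
  have X': "{..<n} - X \<subseteq> {..<n}" by auto
  have Y': "{..<n} - Y \<in> Ksub n (card ({..<n} - X))"
    unfolding Ksub_def using compl_card[OF X] compl_card[OF Ys] cY by auto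
  have "measure_pmf.expectation (pmf_of_set (TXY n X Y)) (g2 n F X) =
        measure_pmf.expectation (pmf_of_set (TXY n ({..<n} - X) ({..<n} - Y))) (g1 n F ({..<n} - X))"
    unfolding TXY_compl[OF X Ys] g1_compl ..
  thus ?thesis using mean_g1_dev[OF X' Y'] by simp
qed

section \<open>The three bad events\<close>

text \<open>Since |f| = 1, the distance of |f_1| from 1 is at most the distance of f_1 from f.\<close>
lemma f1_dist_Boolean: "(\<bar>f1 p\<bar> - 1)^2 \<le> (f p - f1 p)^2"
proof -
  have "\<bar>\<bar>f1 p\<bar> - \<bar>f p\<bar>\<bar> \<le> \<bar>f1 p - f p\<bar>" by (rule abs_triangle_ineq3)
  hence "\<bar>\<bar>f1 p\<bar> - 1\<bar> \<le> \<bar>f p - f1 p\<bar>" using f_pm1[of p] by simp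
  thus ?thesis by (simp add: abs_le_square_iff)
qed

definition dist_Boolean :: "nat set \<times> nat set \<Rightarrow> real" where
  "dist_Boolean = (\<lambda>(X, Y). measure_pmf.expectation (pmf_of_set (TXY n X Y)) (\<lambda>p. (\<bar>f1 p\<bar> - 1)^2))"

lemma expectation_dist_Boolean: "measure_pmf.expectation (distR n) dist_Boolean \<le> fam_eps n F"
proof -
  have "measure_pmf.expectation (distR n) dist_Boolean = (\<Sum>p\<in>Sym n. (\<bar>f1 p\<bar> - 1)^2) / fact n"
    unfolding dist_Boolean_def by (rule distR_mixture)
  also have "\<dots> \<le> (\<Sum>p\<in>Sym n. (f p - f1 p)^2) / fact n"
    by (intro divide_right_mono sum_mono f1_dist_Boolean) simp
  also have "\<dots> = fam_eps n F" by (rule eps_eq[symmetric])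
  finally show ?thesis .
qed

lemma prob_dist_Boolean_large:
  assumes s: "0 < s"
  shows "measure_pmf.prob (distR n) {x. s \<le> dist_Boolean x} \<le> fam_eps n F / s"
proof -
  have "measure_pmf.prob (distR n) {x. s \<le> dist_Boolean x} \<le> measure_pmf.expectation (distR n) dist_Boolean / s"
    by (rule pmf_markov[OF finite_set_pmf_distR _ s]) (auto simp: dist_Boolean_def)
  also have "\<dots> \<le> fam_eps n F / s"
    using expectation_dist_Boolean s by (simp add: divide_right_mono)
  finally show ?thesis .
qed

lemma prob_dev_large:
  assumes s: "0 < s"
  shows "measure_pmf.prob (distR n) {x. s \<le> \<bar>case_prod dev x\<bar>} \<le> 1 / (real n * s^2)"
proof -
  have "measure_pmf.prob (distR n) {x. s \<le> \<bar>case_prod dev x\<bar>}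
      \<le> measure_pmf.expectation (distR n) (\<lambda>x. (case_prod dev x)^2) / s^2"
    by (rule pmf_abs_large[OF finite_set_pmf_distR s])
  also have "\<dots> \<le> (1 / real n) / s^2"
    by (intro divide_right_mono expectation_dev_sq) simp
  finally show ?thesis by simp
qed

lemma prob_dev_compl_large:
  assumes s: "0 < s"
  shows "measure_pmf.prob (distR n) {x. s \<le> \<bar>dev ({..<n} - fst x) ({..<n} - snd x)\<bar>} \<le> 1 / (real n * s^2)"
proof -
  have "measure_pmf.prob (distR n) {x. s \<le> \<bar>dev ({..<n} - fst x) ({..<n} - snd x)\<bar>}
      \<le> measure_pmf.expectation (distR n) (\<lambda>x. (dev ({..<n} - fst x) ({..<n} - snd x))^2) / s^2"
    by (rule pmf_abs_large[OF finite_set_pmf_distR s])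
  also have "measure_pmf.expectation (distR n) (\<lambda>x. (dev ({..<n} - fst x) ({..<n} - snd x))^2)
      = measure_pmf.expectation (distR n) (\<lambda>x. (case_prod dev x)^2)"
    using distR_compl[of n "\<lambda>x. (case_prod dev x)^2"] by (simp add: case_prod_unfold)
  also have "\<dots> / s^2 \<le> (1 / real n) / s^2"
    by (intro divide_right_mono expectation_dev_sq) simp
  finally show ?thesis by simp
qed

lemma good_restriction:
  assumes XY: "(X, Y) \<in> set_pmf (distR n)" and t: "0 < t"
    and Z: "dist_Boolean (X, Y) \<le> t^2 * \<delta>"
    and d1: "\<bar>dev X Y\<bar> \<le> t" and d2: "\<bar>dev ({..<n} - X) ({..<n} - Y)\<bar> \<le> t"
  shows "almost_boolean (pmf_of_set (TXY n X Y)) (gfun n F X) \<delta> t"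
    and "\<bar>measure_pmf.expectation (pmf_of_set (TXY n X Y)) (g1 n F X) - (fam_c n F - 1/2)\<bar> \<le> t"
    and "\<bar>measure_pmf.expectation (pmf_of_set (TXY n X Y)) (g2 n F X) - (fam_c n F - 1/2)\<bar> \<le> t"
    and "measure_pmf.expectation (pmf_of_set (TXY n X Y)) (\<lambda>p. (\<bar>gfun n F X p\<bar> - 1)^2) \<le> t^2 * \<delta>"
proof -
  have X: "X \<subseteq> {..<n}" and Y: "Y \<in> Ksub n (card X)" using XY by (auto simp: set_pmf_distR)
  have E: "measure_pmf.expectation (pmf_of_set (TXY n X Y)) (\<lambda>p. (\<bar>gfun n F X p\<bar> - 1)^2)
      = dist_Boolean (X, Y)"
    unfolding dist_Boolean_def by (simp add: gfun_eq[OF X])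
  show "measure_pmf.expectation (pmf_of_set (TXY n X Y)) (\<lambda>p. (\<bar>gfun n F X p\<bar> - 1)^2) \<le> t^2 * \<delta>"
    using E Z by simp
  have "finite (set_pmf (pmf_of_set (TXY n X Y)))"
    by (simp add: set_pmf_of_set[OF TXY_ne[OF X Y] TXY_finite] TXY_finite)
  thus "almost_boolean (pmf_of_set (TXY n X Y)) (gfun n F X) \<delta> t"
    using E Z t by (intro almost_boolean_second_moment) simp_all
  show "\<bar>measure_pmf.expectation (pmf_of_set (TXY n X Y)) (g1 n F X) - (fam_c n F - 1/2)\<bar> \<le> t"
    using mean_g1_dev[OF X Y] d1 by simp
  show "\<bar>measure_pmf.expectation (pmf_of_set (TXY n X Y)) (g2 n F X) - (fam_c n F - 1/2)\<bar> \<le> t"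
    using mean_g2_dev[OF X Y] d2 by simp
qed

end

theorem lemma2p4:
  fixes n :: nat and F :: "(nat \<Rightarrow> nat) set"
  assumes "n \<ge> 2"
    and "F \<subseteq> Sym n"
    and "fam_eps n F \<ge> real n powr (-7/3)"
  shows "measure_pmf.prob (distR n)
           {(X, Y). let e = fam_eps n F; M = pmf_of_set (TXY n X Y) in
              almost_boolean M (gfun n F X) (e powr (4/7)) (e powr (1/7))
            \<and> \<bar>measure_pmf.expectation M (g1 n F X) - (fam_c n F - 1/2)\<bar> \<le> e powr (1/7)
            \<and> \<bar>measure_pmf.expectation M (g2 n F X) - (fam_c n F - 1/2)\<bar> \<le> e powr (1/7)
            \<and> measure_pmf.expectation M (\<lambda>p. (\<bar>gfun n F X p\<bar> - 1)^2) \<le> e powr (6/7)}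
         \<ge> 1 - 3 * fam_eps n F powr (1/7)"
  (is "measure_pmf.prob (distR n) ?good \<ge> _")
proof -
  interpret family n F using assms(1,2) by unfold_locales
  define e where "e = fam_eps n F"
  define t where "t = e powr (1/7)"
  have n0: "0 < n" using assms(1) by simp
  note pw = eps_powers[OF n0 assms(3)[folded e_def], folded t_def]
  have e0: "0 < e" and t0: "0 < t" using pw(1) unfolding t_def by auto
  define B0 where "B0 = {x. e powr (6/7) \<le> dist_Boolean x}"
  define B1 where "B1 = {x. t \<le> \<bar>case_prod dev x\<bar>}"
  define B2 where "B2 = {x. t \<le> \<bar>dev ({..<n} - fst x) ({..<n} - snd x)\<bar>}"
  have cover: "x \<in> ?good \<union> B0 \<union> B1 \<union> B2" if "x \<in> set_pmf (distR n)" for x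
    using good_restriction[of "fst x" "snd x" t "e powr (4/7)"] that t0 pw(4)
    unfolding B0_def B1_def B2_def e_def[symmetric]
    by (cases x) (auto simp: Let_def t_def)
  have "measure_pmf.prob (distR n) B0 \<le> t"
    using prob_dist_Boolean_large[of "e powr (6/7)", folded e_def] pw(2) e0 unfolding B0_def by simp
  moreover have "measure_pmf.prob (distR n) B1 \<le> t"
    using prob_dev_large[OF t0] pw(3) unfolding B1_def by simp
  moreover have "measure_pmf.prob (distR n) B2 \<le> t"
    using prob_dev_compl_large[OF t0] pw(3) unfolding B2_def by simp
  moreover have "1 - measure_pmf.prob (distR n) B0 - measure_pmf.prob (distR n) B1
      - measure_pmf.prob (distR n) B2 \<le> measure_pmf.prob (distR n) ?good"
    by (rule pmf_cover_bound[OF cover])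
  ultimately show ?thesis unfolding t_def e_def by linarith
qed

end
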